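(* Let $n\ge 3$ and fix a triangulation $\tau$ of an abstract convex $n$-gon with vertices labeled $1,\dots,n$ in cyclic order, by non-crossing diagonals. Let $I_\tau$ be the set consisting of one element $t$ for each triangle of $\tau$ and two elements $(j,k)$ and $(k,j)$ for each diagonal $\{j,k\}$ of $\tau$. Define $\Phi_\tau:\mathcal P_3^n\to\mathbb R^{I_\tau}$ by: for a triangle with vertices $i<j<k$, its coordinate is the triple ratio of the flags $(A_i,a_i),(A_j,a_j),(A_k,a_k)$; for a diagonal $\{j,l\}$ which is the diagonal of the quadrilateral of $\tau$ with vertices $j,k,l,m$ in cyclic order, the coordinate at $(j,l)$ is the cross-ratio of the lines $a_j, A_jA_k, A_jA_l, A_jA_m$ through $A_j$, and the coordinate at $(l,j)$ is the cross-ratio of the lines $a_l, A_lA_m, A_lA_j, A_lA_k$ through $A_l$. Then $\Phi_\tau$ is a bijection from $\mathcal P_3^n$ onto $\mathbb R_{>0}^{I_\tau}$.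
   Context: A flag in $\mathbb{RP}^2$ is a pair $(A,a)$ of a point $A$ and a line $a\ni A$. $\mathcal P_3^n$ is the set of $n$-tuples of flags $((A_1,a_1),\dots,(A_n,a_n))$ such that, in some affine chart $\mathbb R^2\subset\mathbb{RP}^2$, the lines $a_1,\dots,a_n$ bound a compact convex $n$-gon whose sides in cyclic order lie on $a_1,\dots,a_n$, and each $A_i$ lies in the relative interior of the side on $a_i$ (so $A_1\dots A_n$ is a convex $n$-gon inscribed in it), taken modulo the diagonal action of $PGL_3(\mathbb R)$. The triple ratio of flags $(A,a),(B,b),(C,c)$ is $\frac{f_a(\tilde B)f_b(\tilde C)f_c(\tilde A)}{f_a(\tilde C)f_b(\tilde A)f_c(\tilde B)}$, where $f_a,f_b,f_c\in(\mathbb R^3)^*$ have kernels the planes corresponding to $a,b,c$ and $\tilde A,\tilde B,\tilde C$ are nonzero lifts of $A,B,C$ to $\mathbb R^3$. The cross-ratio of four concurrent lines $x_1,x_2,x_3,x_4$ (viewed as points on the projective line of lines through their common point) is $\frac{(x_1-x_2)(x_3-x_4)}{(x_1-x_4)(x_2-x_3)}$ in any affine coordinate. *)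

theory Defs
  imports "HOL-Analysis.Analysis" "HOL-Analysis.Cross3" "HOL-Library.FuncSet"
begin

text \<open>Projective plane: a point is represented by a nonzero lift in real^3, a line by a
  nonzero covector in real^3 (pairing = inner product).\<close>

type_synonym config = "nat \<Rightarrow> ((real^3) \<times> (real^3))"

definition pt :: "config \<Rightarrow> nat \<Rightarrow> real^3" where "pt c i = fst (c i)"
definition ln :: "config \<Rightarrow> nat \<Rightarrow> real^3" where "ln c i = snd (c i)"

definition cprev :: "nat \<Rightarrow> nat \<Rightarrow> nat" where
  "cprev n i = (if i = 1 then n else i - 1)"

text \<open>The space of configurations underlying P_3^n (before quotienting by PGL_3).
  Affine chart = {x. h \<bullet> x \<noteq> 0}, normalised as h \<bullet> x = 1.  P i is the vertex of
  the n-gon between the sides on a_(i-1) and a_i.  The n-gon with vertices P 1..P n is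
  compact and convex with sides on a_1..a_n in cyclic order iff each a_i passes through
  P (i-1), P i and all other vertices lie strictly on one side of a_i.  A_i lies in the
  relative interior of the side [P (i-1), P i].\<close>
definition Pconf :: "nat \<Rightarrow> config set" where
  "Pconf n = {c. \<exists>(h::real^3) (P::nat \<Rightarrow> real^3).
      (\<forall>i\<in>{1..n}. h \<bullet> P i = 1) \<and>
      (\<forall>i\<in>{1..n}.
          ln c i \<bullet> P (cprev n i) = 0 \<and> ln c i \<bullet> P i = 0 \<and>
          ((\<forall>j\<in>{1..n} - {cprev n i, i}. ln c i \<bullet> P j > 0) \<or>
           (\<forall>j\<in>{1..n} - {cprev n i, i}. ln c i \<bullet> P j < 0)) \<and>
          (\<exists>s t r. r \<noteq> 0 \<and> s > 0 \<and> t > 0 \<and>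
              r *\<^sub>R pt c i = s *\<^sub>R P (cprev n i) + t *\<^sub>R P i))}"

text \<open>The diagonal PGL_3 action together with rescaling of lifts:
  (A, a) \<mapsto> (g A, a g^{-1}), i.e. a = a' g up to scalars.\<close>
definition pgl_rel :: "nat \<Rightarrow> (config \<times> config) set" where
  "pgl_rel n = {(c, c'). c \<in> Pconf n \<and> c' \<in> Pconf n \<and>
      (\<exists>g::real^3^3. invertible g \<and>
        (\<forall>i\<in>{1..n}. \<exists>s u. s \<noteq> 0 \<and> u \<noteq> 0 \<and>
            pt c' i = s *\<^sub>R (g *v pt c i) \<and> ln c i = u *\<^sub>R (ln c' i v* g)))}"

definition P3 :: "nat \<Rightarrow> config set set" where
  "P3 n = Pconf n // pgl_rel n"

definition triple_ratio ::
  "real^3 \<Rightarrow> real^3 \<Rightarrow> real^3 \<Rightarrow> real^3 \<Rightarrow> real^3 \<Rightarrow> real^3 \<Rightarrow> real" where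
  "triple_ratio A a B b C c =
     ((a \<bullet> B) * (b \<bullet> C) * (c \<bullet> A)) / ((a \<bullet> C) * (b \<bullet> A) * (c \<bullet> B))"

text \<open>The pencil of lines through X is the projective line P(X^\<perp>); the 2x2 determinant of
  two of its elements in a basis of X^\<perp> is, up to a fixed nonzero factor, det[u; v; X].
  This is the homogeneous form of (x1-x2)(x3-x4)/((x1-x4)(x2-x3)).\<close>
definition det3 :: "real^3 \<Rightarrow> real^3 \<Rightarrow> real^3 \<Rightarrow> real" where
  "det3 u v w = det (vector [u, v, w] :: real^3^3)"

definition cross_ratio_lines ::
  "real^3 \<Rightarrow> real^3 \<Rightarrow> real^3 \<Rightarrow> real^3 \<Rightarrow> real^3 \<Rightarrow> real" where
  "cross_ratio_lines X x1 x2 x3 x4 =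
     (det3 x1 x2 X * det3 x3 x4 X) / (det3 x1 x4 X * det3 x2 x3 X)"

definition join :: "real^3 \<Rightarrow> real^3 \<Rightarrow> real^3" where
  "join A B = cross3 A B"

text \<open>Diagonals are stored as pairs (a,b) with a < b.\<close>
definition is_diag :: "nat \<Rightarrow> nat \<times> nat \<Rightarrow> bool" where
  "is_diag n p = (1 \<le> fst p \<and> fst p + 2 \<le> snd p \<and> snd p \<le> n \<and> \<not> (fst p = 1 \<and> snd p = n))"

definition crosses :: "nat \<times> nat \<Rightarrow> nat \<times> nat \<Rightarrow> bool" where
  "crosses p q = ((fst p < fst q \<and> fst q < snd p \<and> snd p < snd q) \<or>
                  (fst q < fst p \<and> fst p < snd q \<and> snd q < snd p))"

definition poly_triangulation :: "nat \<Rightarrow> (nat \<times> nat) set \<Rightarrow> bool" where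
  "poly_triangulation n D = (D \<subseteq> {p. is_diag n p} \<and>
      (\<forall>p\<in>D. \<forall>q\<in>D. \<not> crosses p q) \<and>
      (\<forall>p. is_diag n p \<and> p \<notin> D \<longrightarrow> (\<exists>q\<in>D. crosses p q)))"

definition is_edge :: "nat \<Rightarrow> (nat \<times> nat) set \<Rightarrow> nat \<Rightarrow> nat \<Rightarrow> bool" where
  "is_edge n D a b = (b = a + 1 \<or> (a = 1 \<and> b = n) \<or> (a, b) \<in> D)"

definition is_tri :: "nat \<Rightarrow> (nat \<times> nat) set \<Rightarrow> nat \<Rightarrow> nat \<Rightarrow> nat \<Rightarrow> bool" where
  "is_tri n D i j k = (1 \<le> i \<and> i < j \<and> j < k \<and> k \<le> n \<and>
      is_edge n D i j \<and> is_edge n D j k \<and> is_edge n D i k)"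

definition tri_sets :: "nat \<Rightarrow> (nat \<times> nat) set \<Rightarrow> nat set set" where
  "tri_sets n D = {{i, j, k} | i j k. is_tri n D i j k}"

text \<open>r lies strictly between p and q in the cyclic order going forward from p.\<close>
definition cbetw :: "nat \<Rightarrow> nat \<Rightarrow> nat \<Rightarrow> bool" where
  "cbetw p r q = ((p < q \<and> p < r \<and> r < q) \<or> (q < p \<and> (p < r \<or> r < q)))"

text \<open>For a diagonal {p,q}, the vertex of the quadrilateral p,k,q,m (cyclic order)
  lying between p and q: the third vertex of the triangle of D on that side.\<close>
definition opp_vertex :: "nat \<Rightarrow> (nat \<times> nat) set \<Rightarrow> nat \<Rightarrow> nat \<Rightarrow> nat" where
  "opp_vertex n D p q = (THE r. {p, r, q} \<in> tri_sets n D \<and> cbetw p r q)"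

datatype coord_index = Tri nat nat nat | Dg nat nat

definition Iset :: "nat \<Rightarrow> (nat \<times> nat) set \<Rightarrow> coord_index set" where
  "Iset n D = {Tri i j k | i j k. is_tri n D i j k} \<union>
              {Dg j k | j k. (j, k) \<in> D} \<union> {Dg k j | j k. (j, k) \<in> D}"

text \<open>For the ordered pair (p,q), with k = vertex between p and q and
  m = vertex between q and p (so p,k,q,m cyclic): cross-ratio of
  a_p, A_pA_k, A_pA_q, A_pA_m through A_p.  For (j,l) this is the paper's formula, and for
  (l,j) it gives a_l, A_lA_m, A_lA_j, A_lA_k.\<close>
fun coord :: "nat \<Rightarrow> (nat \<times> nat) set \<Rightarrow> config \<Rightarrow> coord_index \<Rightarrow> real" where
  "coord n D c (Tri i j k) =
     triple_ratio (pt c i) (ln c i) (pt c j) (ln c j) (pt c k) (ln c k)"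
| "coord n D c (Dg p q) =
     (let k = opp_vertex n D p q; m = opp_vertex n D q p in
      cross_ratio_lines (pt c p) (ln c p) (join (pt c p) (pt c k))
         (join (pt c p) (pt c q)) (join (pt c p) (pt c m)))"

definition Phi :: "nat \<Rightarrow> (nat \<times> nat) set \<Rightarrow> config \<Rightarrow> (coord_index \<Rightarrow> real)" where
  "Phi n D c = restrict (coord n D c) (Iset n D)"

definition PhiQ :: "nat \<Rightarrow> (nat \<times> nat) set \<Rightarrow> config set \<Rightarrow> (coord_index \<Rightarrow> real)" where
  "PhiQ n D X = Phi n D (SOME c. c \<in> X)"

end

theory Submission
  imports Defs
begin

text \<open>Normalised lifts \<open>A i\<close> of the points and \<open>L i\<close> of the lines of a configuration in \<open>Pconf n\<close>
  satisfy \<open>L i \<bullet> A j > 0\<close> for \<open>i \<noteq> j\<close> and \<open>det3 (A x) (A y) (A z) > 0\<close> for \<open>x < y < z\<close>, which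
  makes every coordinate positive.  The rest is an induction along the ears of the triangulation:
  removing an ear \<open>v - 1, v, v + 1\<close> leaves a triangulated \<open>(n - 1)\<close>-gon whose coordinates are
  coordinates of the \<open>n\<close>-gon.  The three remaining ones (the triple ratio of the ear and the two
  cross-ratios on its diagonal) determine the flag at \<open>v\<close> up to scale once the other flags are
  fixed, which gives injectivity; conversely, for any three positive values a flag at \<open>v\<close>
  realising them is obtained by cutting off the vertex \<open>v - 1\<close> of the smaller polygon by a line,
  which keeps the polygon convex and gives surjectivity.\<close>

section \<open>Determinants of three vectors\<close>

lemma det3_expand:
  "det3 u v w = u$1 * v$2 * w$3 - u$1 * v$3 * w$2 - u$2 * v$1 * w$3
     + u$2 * v$3 * w$1 + u$3 * v$1 * w$2 - u$3 * v$2 * w$1"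
  unfolding det3_def by (simp add: det_3 vector_def algebra_simps)

lemma inner_real3: "(u::real^3) \<bullet> v = u$1 * v$1 + u$2 * v$2 + u$3 * v$3"
  by (simp add: inner_vec_def sum_3)

lemma join_nth:
  "join A B $ 1 = A$2 * B$3 - A$3 * B$2"
  "join A B $ 2 = A$3 * B$1 - A$1 * B$3"
  "join A B $ 3 = A$1 * B$2 - A$2 * B$1"
  by (simp_all add: join_def cross3_def)

lemma vec3_eq_iff: "(x::real^3) = y \<longleftrightarrow> x$1 = y$1 \<and> x$2 = y$2 \<and> x$3 = y$3"
  by (simp add: vec_eq_iff forall_3)

lemmas vec3_simps = det3_expand inner_real3 join_nth
  vector_add_component vector_scaleR_component vector_minus_component

lemma det3_rotate: "det3 u v w = det3 v w u"
  by (simp add: det3_expand algebra_simps)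

lemma det3_swap12: "det3 u v w = - det3 v u w"
  by (simp add: det3_expand algebra_simps)

lemma det3_swap23: "det3 u v w = - det3 u w v"
  by (simp add: det3_expand algebra_simps)

lemma det3_repeated: "det3 u u w = 0" "det3 u v u = 0" "det3 u v v = 0"
  by (simp_all add: det3_expand algebra_simps)

lemma det3_linear:
  "det3 (s *\<^sub>R u + t *\<^sub>R u') v w = s * det3 u v w + t * det3 u' v w"
  "det3 v (s *\<^sub>R u + t *\<^sub>R u') w = s * det3 v u w + t * det3 v u' w"
  "det3 v w (s *\<^sub>R u + t *\<^sub>R u') = s * det3 v w u + t * det3 v w u'"
  by (simp_all add: vec3_simps algebra_simps)

lemma det3_scaleR:
  "det3 (s *\<^sub>R u) v w = s * det3 u v w"
  "det3 v (s *\<^sub>R u) w = s * det3 v u w"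
  "det3 v w (s *\<^sub>R u) = s * det3 v w u"
  by (simp_all add: vec3_simps algebra_simps)

lemma det3_eq_inner_join: "det3 u v w = join u v \<bullet> w"
  by (simp add: vec3_simps algebra_simps)

lemma join_scaleR: "join (r *\<^sub>R A) (s *\<^sub>R B) = (r * s) *\<^sub>R join A B"
  by (simp add: vec3_eq_iff vec3_simps algebra_simps)

lemma det3_join_self: "det3 U V (join U V) = join U V \<bullet> join U V"
  by (simp add: vec3_simps algebra_simps)

lemma join_join: "join (join U V) l = (l \<bullet> U) *\<^sub>R V - (l \<bullet> V) *\<^sub>R U"
  by (simp add: vec3_eq_iff vec3_simps algebra_simps)

lemma det3_join_covectors: "det3 a b (join A B) = (a \<bullet> A) * (b \<bullet> B) - (a \<bullet> B) * (b \<bullet> A)"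
  by (simp add: vec3_simps algebra_simps)

lemma det3_cramer:
  "det3 u1 u2 u3 *\<^sub>R z = det3 z u2 u3 *\<^sub>R u1 + det3 u1 z u3 *\<^sub>R u2 + det3 u1 u2 z *\<^sub>R u3"
  by (simp add: vec3_eq_iff vec3_simps algebra_simps)

lemma det3_cramer_dual:
  "det3 u1 u2 u3 *\<^sub>R z = (u1 \<bullet> z) *\<^sub>R join u2 u3 + (u2 \<bullet> z) *\<^sub>R join u3 u1 + (u3 \<bullet> z) *\<^sub>R join u1 u2"
  by (simp add: vec3_eq_iff vec3_simps algebra_simps)

lemma eq_0_if_inner_basis_eq_0:
  assumes "det3 u1 u2 u3 \<noteq> 0" "u1 \<bullet> z = 0" "u2 \<bullet> z = 0" "u3 \<bullet> z = 0"
  shows "z = 0"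
  using det3_cramer_dual[of u1 u2 u3 z] assms by simp

lemma det3_exchange:
  "det3 U V Z * (l \<bullet> W) - det3 U V W * (l \<bullet> Z) = (l \<bullet> U) * det3 V Z W - (l \<bullet> V) * det3 U Z W"
  by (simp add: vec3_simps algebra_simps)

lemma det3_pluecker:
  "det3 X E W * det3 X U Z = det3 X E U * det3 X W Z + det3 X E Z * det3 X U W"
  by (simp add: vec3_simps algebra_simps)

lemma det3_matrix_vector_mult: "det3 (g *v x) (g *v y) (g *v z) = det g * det3 x y z"
  by (simp add: det3_expand det_3 matrix_vector_mult_def sum_3 algebra_simps)

lemma cross_ratio_lines_join:
  assumes "a \<bullet> A = 0" "A \<noteq> 0"
  shows "cross_ratio_lines A a (join A K) (join A Q) (join A M) =
         ((a \<bullet> K) * det3 A Q M) / ((a \<bullet> M) * det3 A K Q)"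
proof -
  have "det3 a (join A X) A = (a \<bullet> X) * (A \<bullet> A) - (a \<bullet> A) * (X \<bullet> A)" for X
    by (simp add: vec3_simps algebra_simps)
  moreover have "det3 (join A X) (join A Y) A = det3 A X Y * (A \<bullet> A)" for X Y
    by (simp add: vec3_simps algebra_simps)
  moreover have "A \<bullet> A \<noteq> 0" using assms(2) by simp
  ultimately show ?thesis unfolding cross_ratio_lines_def using assms(1) by (simp add: field_simps)
qed

lemma divide_cancel_common_factor:
  "(K::real) \<noteq> 0 \<Longrightarrow> x' = K * x \<Longrightarrow> y' = K * y \<Longrightarrow> x' / y' = x / y"
  by simp

lemma triple_ratio_scaleR:
  assumes "r1 \<noteq> 0" "r2 \<noteq> 0" "r3 \<noteq> 0" "e1 \<noteq> 0" "e2 \<noteq> 0" "e3 \<noteq> 0"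
  shows "triple_ratio (r1 *\<^sub>R A) (e1 *\<^sub>R a) (r2 *\<^sub>R B) (e2 *\<^sub>R b) (r3 *\<^sub>R C) (e3 *\<^sub>R c) =
         triple_ratio A a B b C c"
  unfolding triple_ratio_def
  by (rule divide_cancel_common_factor[of "e1 * e2 * e3 * r1 * r2 * r3"])
    (use assms in \<open>simp_all add: algebra_simps\<close>)

lemma cross_ratio_lines_scaleR:
  assumes "r \<noteq> 0" "e1 \<noteq> 0" "e2 \<noteq> 0" "e3 \<noteq> 0" "e4 \<noteq> 0"
  shows "cross_ratio_lines (r *\<^sub>R X) (e1 *\<^sub>R x1) (e2 *\<^sub>R x2) (e3 *\<^sub>R x3) (e4 *\<^sub>R x4) =
         cross_ratio_lines X x1 x2 x3 x4"
  unfolding cross_ratio_lines_def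
  by (rule divide_cancel_common_factor[of "e1 * e2 * e3 * e4 * r * r"])
    (use assms in \<open>simp_all add: det3_scaleR algebra_simps\<close>)

section \<open>Triangulations of the abstract polygon\<close>

definition joined :: "nat \<Rightarrow> (nat \<times> nat) set \<Rightarrow> nat \<Rightarrow> nat \<Rightarrow> bool" where
  "joined n D x y = is_edge n D (min x y) (max x y)"

definition is_opp_vertex :: "nat \<Rightarrow> (nat \<times> nat) set \<Rightarrow> nat \<Rightarrow> nat \<Rightarrow> nat \<Rightarrow> bool" where
  "is_opp_vertex n D p r q = ({p, r, q} \<in> tri_sets n D \<and> cbetw p r q)"

lemma joined_sym: "joined n D x y = joined n D y x"
  unfolding joined_def by (simp add: min.commute max.commute)

lemma joined_less: "x < y \<Longrightarrow> joined n D x y = is_edge n D x y"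
  unfolding joined_def by simp

lemma tri_setsD:
  assumes "{p, r, q} \<in> tri_sets n D"
  shows "p \<in> {1..n} \<and> r \<in> {1..n} \<and> q \<in> {1..n} \<and> p \<noteq> r \<and> p \<noteq> q \<and> r \<noteq> q \<and>
         joined n D p r \<and> joined n D r q \<and> joined n D p q"
proof -
  obtain i j k where eq: "{p, r, q} = {i, j, k}" and t: "is_tri n D i j k"
    using assms unfolding tri_sets_def by blast
  have ijk: "1 \<le> i" "i < j" "j < k" "k \<le> n" using t unfolding is_tri_def by auto
  have "joined n D i j" "joined n D j k" "joined n D i k"
    using t ijk unfolding is_tri_def by (simp_all add: joined_less)
  then have joined: "joined n D x y" if "x \<in> {i, j, k}" "y \<in> {i, j, k}" "x \<noteq> y" for x y
    using that joined_sym by blast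
  have "card {p, r, q} = 3" using eq ijk by auto
  then have "p \<noteq> r \<and> p \<noteq> q \<and> r \<noteq> q" by (auto simp: card_insert_if split: if_splits)
  moreover have "p \<in> {i, j, k}" "r \<in> {i, j, k}" "q \<in> {i, j, k}" using eq by blast+
  ultimately show ?thesis using joined ijk by auto
qed

lemma triangulation_diag:
  "poly_triangulation n D \<Longrightarrow> (a, b) \<in> D \<Longrightarrow> 1 \<le> a \<and> a + 2 \<le> b \<and> b \<le> n \<and> \<not> (a = 1 \<and> b = n)"
  unfolding poly_triangulation_def is_diag_def by auto

lemma triangulation_no_crossing:
  "poly_triangulation n D \<Longrightarrow> (a, b) \<in> D \<Longrightarrow> (c, d) \<in> D \<Longrightarrow> a < c \<Longrightarrow> c < b \<Longrightarrow> b < d \<Longrightarrow> False"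
  unfolding poly_triangulation_def crosses_def by fastforce

lemma triangulation_maximal:
  "poly_triangulation n D \<Longrightarrow> is_diag n p \<Longrightarrow> p \<notin> D \<Longrightarrow> \<exists>q\<in>D. crosses p q"
  unfolding poly_triangulation_def by blast

lemma triangulation_3_empty: "poly_triangulation 3 D \<Longrightarrow> D = {}"
  unfolding poly_triangulation_def is_diag_def by fastforce

lemma is_edge_diag: "is_edge n D x y \<Longrightarrow> x + 1 < y \<Longrightarrow> \<not> (x = 1 \<and> y = n) \<Longrightarrow> (x, y) \<in> D"
  unfolding is_edge_def by auto

lemma joined_no_crossing:
  assumes tri: "poly_triangulation n D"
    and "joined n D p r'" "joined n D r q"
    and "p \<in> {1..n}" "q \<in> {1..n}" "r \<in> {1..n}" "r' \<in> {1..n}"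
    and "(p < r \<and> r < r' \<and> r' < q) \<or> (q < p \<and> p < r \<and> r < r') \<or> (q < p \<and> r < r' \<and> r' < q)
          \<or> (q < p \<and> r' < q \<and> p < r)"
  shows False
proof -
  have diag: "(x, y) \<in> D" if "joined n D x y \<or> joined n D y x" "x \<in> {1..n}" "y \<in> {1..n}"
    "x + 1 < y" "\<not> (x = 1 \<and> y = n)" for x y
    using that by (intro is_edge_diag) (auto simp: joined_less joined_sym[of n D y x])
  from assms(8) show False
  proof (elim disjE conjE)
    assume "p < r" "r < r'" "r' < q"
    then show False using diag[of p r'] diag[of r q] assms(2-7)
        triangulation_no_crossing[OF tri, of p r' r q] by auto
  next
    assume "q < p" "p < r" "r < r'"
    then show False using diag[of p r'] diag[of q r] assms(2-7)
        triangulation_no_crossing[OF tri, of q r p r'] by auto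
  next
    assume "q < p" "r < r'" "r' < q"
    then show False using diag[of r' p] diag[of r q] assms(2-7)
        triangulation_no_crossing[OF tri, of r q r' p] by auto
  next
    assume "q < p" "r' < q" "p < r"
    then show False using diag[of r' p] diag[of q r] assms(2-7)
        triangulation_no_crossing[OF tri, of r' p q r] by auto
  qed
qed

lemma is_opp_vertex_unique:
  assumes tri: "poly_triangulation n D"
    and opp: "is_opp_vertex n D p r q" "is_opp_vertex n D p r' q"
  shows "r = r'"
proof (rule ccontr)
  assume "r \<noteq> r'"
  have "p \<in> {1..n} \<and> r \<in> {1..n} \<and> q \<in> {1..n} \<and> joined n D p r \<and> joined n D r q"
    "r' \<in> {1..n} \<and> joined n D p r' \<and> joined n D r' q"
    using opp tri_setsD unfolding is_opp_vertex_def by blast+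
  moreover have "cbetw p r q" "cbetw p r' q" using opp unfolding is_opp_vertex_def by auto
  ultimately show False
    using \<open>r \<noteq> r'\<close> joined_no_crossing[OF tri, of p r' r q] joined_no_crossing[OF tri, of p r r' q]
    unfolding cbetw_def by (cases "r < r'") auto
qed

lemma triangulation_has_ear:
  assumes n: "n \<ge> 4" and tri: "poly_triangulation n D"
  shows "\<exists>v. 2 \<le> v \<and> v \<le> n - 1 \<and> (v - 1, v + 1) \<in> D"
proof -
  have "is_diag n (1, 3)" using n unfolding is_diag_def by auto
  then have "D \<noteq> {}" using triangulation_maximal[OF tri] by blast
  then obtain a0 b0 where ab0: "(a0, b0) \<in> D" by auto
  \<comment> \<open>a shortest diagonal cuts off an ear\<close>
  define d where "d = (LEAST d. \<exists>a b. (a, b) \<in> D \<and> b - a = d)"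
  have "\<exists>a b. (a, b) \<in> D \<and> b - a = d" unfolding d_def
    by (rule LeastI[of _ "b0 - a0"]) (use ab0 in blast)
  then obtain a b where ab: "(a, b) \<in> D" "b - a = d" by blast
  have shortest: "d \<le> y - x" if "(x, y) \<in> D" for x y
    unfolding d_def by (rule Least_le) (use that in blast)
  have pa: "1 \<le> a \<and> a + 2 \<le> b \<and> b \<le> n \<and> \<not> (a = 1 \<and> b = n)" using triangulation_diag[OF tri ab(1)] .
  show ?thesis
  proof (cases "d = 2")
    case True
    then have "b = a + 2" using ab pa by auto
    then show ?thesis using ab pa by (intro exI[of _ "a + 1"]) auto
  next
    case False
    then have d3: "b \<ge> a + 3" using ab pa by auto
    have "is_diag n (a, a + 2)" using pa d3 unfolding is_diag_def by auto
    moreover have "(a, a + 2) \<notin> D" using shortest[of a "a + 2"] d3 ab by auto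
    ultimately have "\<exists>q\<in>D. crosses (a, a + 2) q" by (rule triangulation_maximal[OF tri])
    then obtain x y where xy: "(x, y) \<in> D" "crosses (a, a + 2) (x, y)" by auto
    show ?thesis
    proof (cases "a < x")
      case True
      then have "x = a + 1" "y > a + 2" using xy(2) unfolding crosses_def by auto
      moreover have "d \<le> y - x" using shortest[OF xy(1)] .
      ultimately have "b < y" using ab by auto
      then show ?thesis using triangulation_no_crossing[OF tri ab(1) xy(1)] \<open>x = a + 1\<close> d3 by auto
    next
      case False
      then have "y = a + 1" "x < a" using xy(2) unfolding crosses_def by auto
      then show ?thesis using triangulation_no_crossing[OF tri xy(1) ab(1)] d3 by auto
    qed
  qed
qed

lemma ear_tip_not_in_diag:
  assumes tri: "poly_triangulation n D" and ear: "(v - 1, v + 1) \<in> D" and v: "2 \<le> v"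
    and ab: "(a, b) \<in> D"
  shows "a \<noteq> v \<and> b \<noteq> v"
proof -
  have "1 \<le> a \<and> a + 2 \<le> b \<and> b \<le> n" using triangulation_diag[OF tri ab] by auto
  then show ?thesis
    using v triangulation_no_crossing[OF tri ear ab] triangulation_no_crossing[OF tri ab ear] by force
qed

section \<open>Removing an ear\<close>

definition skip :: "nat \<Rightarrow> nat \<Rightarrow> nat" where
  "skip v i = (if i < v then i else Suc i)"

definition unskip :: "nat \<Rightarrow> nat \<Rightarrow> nat" where
  "unskip v i = (if i < v then i else i - 1)"

definition remove_ear :: "nat \<Rightarrow> (nat \<times> nat) set \<Rightarrow> (nat \<times> nat) set" where
  "remove_ear v D = (\<lambda>(a, b). (unskip v a, unskip v b)) ` (D - {(v - 1, v + 1)})"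

fun skip_index :: "nat \<Rightarrow> coord_index \<Rightarrow> coord_index" where
  "skip_index v (Tri i j k) = Tri (skip v i) (skip v j) (skip v k)"
| "skip_index v (Dg p q) = Dg (skip v p) (skip v q)"

lemma unskip_skip [simp]: "unskip v (skip v i) = i"
  unfolding unskip_def skip_def by auto

lemma skip_unskip: "i \<noteq> v \<Longrightarrow> skip v (unskip v i) = i"
  unfolding unskip_def skip_def by auto

lemma skip_neq [simp]: "skip v i \<noteq> v"
  unfolding skip_def by auto

lemma skip_less_iff [simp]: "skip v i < skip v j \<longleftrightarrow> i < j"
  unfolding skip_def by auto

lemma skip_eq_iff [simp]: "skip v i = skip v j \<longleftrightarrow> i = j"
  unfolding skip_def by auto

lemma unskip_inj: "i \<noteq> v \<Longrightarrow> j \<noteq> v \<Longrightarrow> unskip v i = unskip v j \<Longrightarrow> i = j"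
  by (metis skip_unskip)

lemma crosses_skip: "crosses (skip v a, skip v b) (skip v c, skip v d) = crosses (a, b) (c, d)"
  unfolding crosses_def by simp

locale ear =
  fixes n v :: nat and D :: "(nat \<times> nat) set"
  assumes n4: "n \<ge> 4" and tri: "poly_triangulation n D" and v2: "2 \<le> v" and vn: "v \<le> n - 1"
    and ear: "(v - 1, v + 1) \<in> D"
begin

lemma diag_avoids_tip: "(a, b) \<in> D \<Longrightarrow> a \<noteq> v \<and> b \<noteq> v"
  using ear_tip_not_in_diag[OF tri ear v2] by blast

lemma skip_1 [simp]: "skip v 1 = 1"
  using v2 unfolding skip_def by auto

lemma skip_last [simp]: "skip v (n - 1) = n"
  using vn v2 unfolding skip_def by auto

lemma skip_eq_1_iff: "skip v i = 1 \<longleftrightarrow> i = 1"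
  unfolding skip_def using v2 by auto

lemma skip_eq_last_iff: "skip v i = n \<longleftrightarrow> i = n - 1"
  unfolding skip_def using v2 vn by auto

lemma unskip_range: "i \<in> {1..n} \<Longrightarrow> i \<noteq> v \<Longrightarrow> unskip v i \<in> {1..n - 1}"
  using v2 vn unfolding unskip_def by auto

lemma unskip_eq_pred_iff: "i \<noteq> v \<Longrightarrow> unskip v i = v - 1 \<longleftrightarrow> i = v - 1"
  using v2 unfolding unskip_def by auto

lemma unskip_eq_tip_iff: "i \<noteq> v \<Longrightarrow> unskip v i = v \<longleftrightarrow> i = v + 1"
  using v2 unfolding unskip_def by auto

lemma cprev_tip: "cprev n v = v - 1" "cprev n (v + 1) = v"
  using v2 unfolding cprev_def by auto

lemma cprev_unskip:
  "i \<in> {1..n} \<Longrightarrow> i \<noteq> v \<Longrightarrow> i \<noteq> v + 1 \<Longrightarrow>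
   cprev n i \<noteq> v - 1 \<and> cprev n i \<noteq> v \<and> unskip v (cprev n i) = cprev (n - 1) (unskip v i)"
  using v2 vn n4 unfolding unskip_def cprev_def by auto

lemma remove_ear_iff:
  "(a, b) \<in> remove_ear v D \<longleftrightarrow> (skip v a, skip v b) \<in> D \<and> (skip v a, skip v b) \<noteq> (v - 1, v + 1)"
proof
  assume "(a, b) \<in> remove_ear v D"
  then obtain x y where "(x, y) \<in> D" "(x, y) \<noteq> (v - 1, v + 1)" "a = unskip v x" "b = unskip v y"
    unfolding remove_ear_def by auto
  then show "(skip v a, skip v b) \<in> D \<and> (skip v a, skip v b) \<noteq> (v - 1, v + 1)"
    using diag_avoids_tip skip_unskip by auto
next
  assume "(skip v a, skip v b) \<in> D \<and> (skip v a, skip v b) \<noteq> (v - 1, v + 1)"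
  then show "(a, b) \<in> remove_ear v D" unfolding remove_ear_def
    by (intro image_eqI[of _ _ "(skip v a, skip v b)"]) auto
qed

lemma unskip_in_remove_ear:
  "(j, k) \<in> D \<Longrightarrow> (j, k) \<noteq> (v - 1, v + 1) \<Longrightarrow> (unskip v j, unskip v k) \<in> remove_ear v D"
  using diag_avoids_tip remove_ear_iff skip_unskip by auto

lemma remove_ear_diag: "p \<in> remove_ear v D \<Longrightarrow> is_diag (n - 1) p"
proof -
  assume "p \<in> remove_ear v D"
  then obtain a b where p: "p = (a, b)" and ab: "(skip v a, skip v b) \<in> D" "(skip v a, skip v b) \<noteq> (v - 1, v + 1)"
    using remove_ear_iff by (cases p) auto
  show ?thesis using triangulation_diag[OF tri ab(1)] ab(2) v2 vn unfolding p is_diag_def skip_def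
    by (auto split: if_splits)
qed

lemma remove_ear_maximal:
  assumes "is_diag (n - 1) (a, b)" "(a, b) \<notin> remove_ear v D"
  shows "\<exists>q\<in>remove_ear v D. crosses (a, b) q"
proof -
  have "is_diag n (skip v a, skip v b)" using assms(1) v2 vn unfolding is_diag_def skip_def
    by (auto split: if_splits)
  moreover have "(skip v a, skip v b) \<notin> D"
  proof
    assume "(skip v a, skip v b) \<in> D"
    then have "(skip v a, skip v b) = (v - 1, v + 1)" using assms(2) remove_ear_iff by blast
    then have "a = v - 1" "b = v" using v2 unfolding skip_def by (auto split: if_splits)
    then show False using assms(1) unfolding is_diag_def by auto
  qed
  ultimately have "\<exists>q\<in>D. crosses (skip v a, skip v b) q" by (rule triangulation_maximal[OF tri])
  then obtain x y where xy: "(x, y) \<in> D" "crosses (skip v a, skip v b) (x, y)" by auto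
  have "(x, y) \<noteq> (v - 1, v + 1)"
    using xy(2) unfolding crosses_def by (auto simp: skip_def split: if_splits)
  then have "(unskip v x, unskip v y) \<in> remove_ear v D" using unskip_in_remove_ear xy(1) by blast
  moreover have "crosses (a, b) (unskip v x, unskip v y)"
    using xy crosses_skip[of v a b "unskip v x" "unskip v y"] diag_avoids_tip by (simp add: skip_unskip)
  ultimately show ?thesis by blast
qed

lemma triangulation_remove_ear: "poly_triangulation (n - 1) (remove_ear v D)"
proof -
  have "\<not> crosses p q" if "p \<in> remove_ear v D" "q \<in> remove_ear v D" for p q
  proof -
    obtain a b c d where pq: "p = (a, b)" "q = (c, d)" by (cases p, cases q)
    then have "(skip v a, skip v b) \<in> D" "(skip v c, skip v d) \<in> D" using that remove_ear_iff by auto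
    then have "\<not> crosses (skip v a, skip v b) (skip v c, skip v d)"
      using tri unfolding poly_triangulation_def by blast
    then show ?thesis unfolding pq crosses_skip .
  qed
  then show ?thesis unfolding poly_triangulation_def
    using remove_ear_diag remove_ear_maximal by auto
qed

lemma is_edge_remove_ear:
  assumes "a < b"
  shows "is_edge (n - 1) (remove_ear v D) a b = is_edge n D (skip v a) (skip v b)"
proof (cases "(skip v a, skip v b) = (v - 1, v + 1)")
  case True
  then have "a = v - 1" "b = v" using v2 unfolding skip_def by (auto split: if_splits)
  then show ?thesis using True ear v2 unfolding is_edge_def by auto
next
  case False
  have "(a, b) \<in> remove_ear v D \<longleftrightarrow> (skip v a, skip v b) \<in> D" using remove_ear_iff False by blast
  moreover have "b = a + 1 \<longleftrightarrow> skip v b = skip v a + 1"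
    using False assms v2 unfolding skip_def by (auto split: if_splits)
  ultimately show ?thesis unfolding is_edge_def using skip_eq_1_iff[of a] skip_eq_last_iff[of b] by auto
qed

lemma is_edge_to_tip: "x < v \<Longrightarrow> is_edge n D x v \<Longrightarrow> x = v - 1"
  using diag_avoids_tip[of x v] vn unfolding is_edge_def by auto

lemma is_edge_from_tip: "v < y \<Longrightarrow> is_edge n D v y \<Longrightarrow> y = v + 1"
  using diag_avoids_tip[of v y] v2 unfolding is_edge_def by auto

lemma is_tri_ear: "is_tri n D (v - 1) v (v + 1)"
  using ear v2 vn unfolding is_tri_def is_edge_def by auto

lemma is_tri_at_tip:
  assumes "is_tri n D i j k" "v \<in> {i, j, k}"
  shows "i = v - 1 \<and> j = v \<and> k = v + 1"
proof -
  have o: "i < j" "j < k" "is_edge n D i j" "is_edge n D j k" "is_edge n D i k"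
    using assms(1) unfolding is_tri_def by auto
  consider "v = i" | "v = j" | "v = k" using assms(2) by auto
  then show ?thesis
  proof cases
    case 1
    then show ?thesis using is_edge_from_tip[of j] is_edge_from_tip[of k] o by auto
  next
    case 2
    then show ?thesis using is_edge_to_tip[of i] is_edge_from_tip[of k] o by auto
  next
    case 3
    then show ?thesis using is_edge_to_tip[of i] is_edge_to_tip[of j] o by auto
  qed
qed

lemma is_tri_skip:
  assumes "is_tri (n - 1) (remove_ear v D) i j k"
  shows "is_tri n D (skip v i) (skip v j) (skip v k)"
proof -
  have "1 \<le> i" "i < j" "j < k" "k \<le> n - 1" using assms unfolding is_tri_def by auto
  moreover have "skip v k \<le> n" "1 \<le> skip v i" using calculation vn unfolding skip_def by auto
  ultimately show ?thesis using assms is_edge_remove_ear unfolding is_tri_def by auto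
qed

lemma is_tri_unskip:
  assumes "is_tri n D i j k" "v \<notin> {i, j, k}"
  shows "is_tri (n - 1) (remove_ear v D) (unskip v i) (unskip v j) (unskip v k)"
proof -
  have ord: "1 \<le> unskip v i" "unskip v i < unskip v j" "unskip v j < unskip v k" "unskip v k \<le> n - 1"
    using assms v2 vn unfolding is_tri_def unskip_def by auto
  have "skip v (unskip v i) = i" "skip v (unskip v j) = j" "skip v (unskip v k) = k"
    using assms(2) skip_unskip by auto
  then have "is_edge (n - 1) (remove_ear v D) (unskip v x) (unskip v y) = is_edge n D x y"
    if "x \<in> {i, j, k}" "y \<in> {i, j, k}" "unskip v x < unskip v y" for x y
    using that is_edge_remove_ear by auto
  then show ?thesis using assms(1) ord unfolding is_tri_def by auto
qed

lemma skip_index_in_Iset: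
  assumes "x \<in> Iset (n - 1) (remove_ear v D)"
  shows "skip_index v x \<in> Iset n D"
proof -
  consider (T) i j k where "x = Tri i j k" "is_tri (n - 1) (remove_ear v D) i j k"
    | (Dg) p q j k where "x = Dg p q" "(j, k) \<in> remove_ear v D" "(p, q) = (j, k) \<or> (p, q) = (k, j)"
    using assms unfolding Iset_def by blast
  then show ?thesis
  proof cases
    case T
    then show ?thesis using is_tri_skip unfolding Iset_def by auto
  next
    case Dg
    then show ?thesis using remove_ear_iff unfolding Iset_def by auto
  qed
qed

lemma ear_coords_in_Iset:
  "Tri (v - 1) v (v + 1) \<in> Iset n D" "Dg (v - 1) (v + 1) \<in> Iset n D" "Dg (v + 1) (v - 1) \<in> Iset n D"
  using is_tri_ear ear unfolding Iset_def by blast+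

lemma Iset_ear_cases:
  assumes "y \<in> Iset n D"
  shows "y \<in> {Tri (v - 1) v (v + 1), Dg (v - 1) (v + 1), Dg (v + 1) (v - 1)} \<or>
         (\<exists>x\<in>Iset (n - 1) (remove_ear v D). y = skip_index v x)"
proof -
  consider (T) i j k where "y = Tri i j k" "is_tri n D i j k"
    | (Dg) p q j k where "y = Dg p q" "(j, k) \<in> D" "(p, q) = (j, k) \<or> (p, q) = (k, j)"
    using assms unfolding Iset_def by blast
  then show ?thesis
  proof cases
    case T
    show ?thesis
    proof (cases "v \<in> {i, j, k}")
      case True
      then show ?thesis using is_tri_at_tip T by auto
    next
      case False
      then have "Tri (unskip v i) (unskip v j) (unskip v k) \<in> Iset (n - 1) (remove_ear v D)"
        using is_tri_unskip T unfolding Iset_def by blast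
      moreover have "y = skip_index v (Tri (unskip v i) (unskip v j) (unskip v k))"
        using T False skip_unskip by auto
      ultimately show ?thesis by blast
    qed
  next
    case Dg
    show ?thesis
    proof (cases "(j, k) = (v - 1, v + 1)")
      case True
      then show ?thesis using Dg by auto
    next
      case False
      then have "Dg (unskip v p) (unskip v q) \<in> Iset (n - 1) (remove_ear v D)"
        using Dg unskip_in_remove_ear unfolding Iset_def by blast
      moreover have "y = skip_index v (Dg (unskip v p) (unskip v q))"
        using Dg diag_avoids_tip skip_unskip by auto
      ultimately show ?thesis by blast
    qed
  qed
qed

end

lemma triangulation_induct [consumes 2, case_names triangle ear]:
  assumes "n \<ge> 3" "poly_triangulation n D"
    and triangle: "P 3 {}"
    and ear: "\<And>n v D. ear n v D \<Longrightarrow> P (n - 1) (remove_ear v D) \<Longrightarrow> P n D"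
  shows "P n D"
  using assms(1,2)
proof (induction n arbitrary: D rule: nat_induct_at_least)
  case base
  then show ?case using triangle triangulation_3_empty by blast
next
  case (Suc m)
  obtain v where "2 \<le> v" "v \<le> Suc m - 1" "(v - 1, v + 1) \<in> D"
    using triangulation_has_ear[of "Suc m" D] Suc by auto
  then have "ear (Suc m) v D" using Suc by unfold_locales auto
  then show ?case using ear Suc.IH ear.triangulation_remove_ear by fastforce
qed

text \<open>The side \<open>(i+1, i)\<close> is included so that the induction over ears goes through: the
  diagonal of an ear is a side of the smaller polygon.\<close>
definition opp_vertices_exist :: "nat \<Rightarrow> (nat \<times> nat) set \<Rightarrow> bool" where
  "opp_vertices_exist n D =
    ((\<forall>(p, q)\<in>D. (\<exists>r. is_opp_vertex n D p r q) \<and> (\<exists>r. is_opp_vertex n D q r p)) \<and>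
     (\<forall>i. 1 \<le> i \<and> i < n \<longrightarrow> (\<exists>r. is_opp_vertex n D (i + 1) r i)) \<and>
     (\<exists>r. is_opp_vertex n D 1 r n))"

context ear
begin

lemma is_opp_vertex_skip:
  assumes "is_opp_vertex (n - 1) (remove_ear v D) a r b"
  shows "is_opp_vertex n D (skip v a) (skip v r) (skip v b)"
proof -
  obtain i j k where eq: "{a, r, b} = {i, j, k}" and t: "is_tri (n - 1) (remove_ear v D) i j k"
    using assms unfolding is_opp_vertex_def tri_sets_def by blast
  have "{skip v a, skip v r, skip v b} = skip v ` {a, r, b}" by simp
  also have "\<dots> = {skip v i, skip v j, skip v k}" using eq by simp
  finally have "{skip v a, skip v r, skip v b} \<in> tri_sets n D"
    using is_tri_skip[OF t] unfolding tri_sets_def by blast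
  moreover have "cbetw (skip v a) (skip v r) (skip v b)"
    using assms unfolding is_opp_vertex_def cbetw_def by simp
  ultimately show ?thesis unfolding is_opp_vertex_def by blast
qed

lemma is_opp_vertex_ear_triangle:
  "is_opp_vertex n D (v - 1) v (v + 1)" "is_opp_vertex n D v (v + 1) (v - 1)"
  "is_opp_vertex n D (v + 1) (v - 1) v"
proof -
  have "{v - 1, v, v + 1} \<in> tri_sets n D" using is_tri_ear unfolding tri_sets_def by blast
  moreover have "{v - 1, v, v + 1} = {v, v + 1, v - 1}" "{v - 1, v, v + 1} = {v + 1, v - 1, v}" by auto
  ultimately show "is_opp_vertex n D (v - 1) v (v + 1)" "is_opp_vertex n D v (v + 1) (v - 1)"
    "is_opp_vertex n D (v + 1) (v - 1) v"
    unfolding is_opp_vertex_def cbetw_def using v2 by auto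
qed

lemma opp_vertices_diag_remove_ear:
  assumes IH: "opp_vertices_exist (n - 1) (remove_ear v D)" and pq: "(p, q) \<in> D"
  shows "(\<exists>r. is_opp_vertex n D p r q) \<and> (\<exists>r. is_opp_vertex n D q r p)"
proof (cases "(p, q) = (v - 1, v + 1)")
  case True
  have "1 \<le> v - 1 \<and> v - 1 < n - 1" using v2 vn n4 by auto
  then have "\<exists>r. is_opp_vertex (n - 1) (remove_ear v D) ((v - 1) + 1) r (v - 1)"
    using IH unfolding opp_vertices_exist_def by blast
  then obtain r where "is_opp_vertex (n - 1) (remove_ear v D) v r (v - 1)" using v2 by auto
  then have "is_opp_vertex n D (v + 1) (skip v r) (v - 1)"
    using is_opp_vertex_skip[of v r "v - 1"] v2 unfolding skip_def by auto
  then show ?thesis using True is_opp_vertex_ear_triangle by auto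
next
  case False
  then have "(unskip v p, unskip v q) \<in> remove_ear v D" using unskip_in_remove_ear pq by blast
  then obtain r1 r2 where "is_opp_vertex (n - 1) (remove_ear v D) (unskip v p) r1 (unskip v q)"
    "is_opp_vertex (n - 1) (remove_ear v D) (unskip v q) r2 (unskip v p)"
    using IH unfolding opp_vertices_exist_def by blast
  then show ?thesis using is_opp_vertex_skip skip_unskip diag_avoids_tip[OF pq] by metis
qed

lemma opp_vertex_side_remove_ear:
  assumes IH: "opp_vertices_exist (n - 1) (remove_ear v D)" and i: "1 \<le> i" "i < n"
  shows "\<exists>r. is_opp_vertex n D (i + 1) r i"
proof -
  consider "i = v - 1" | "i = v" | "i < v - 1" | "i > v" by linarith
  then show ?thesis
  proof cases
    case 1
    then show ?thesis using is_opp_vertex_ear_triangle(2) v2 by auto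
  next
    case 2
    then show ?thesis using is_opp_vertex_ear_triangle(3) by auto
  next
    case 3
    then obtain r where "is_opp_vertex (n - 1) (remove_ear v D) (i + 1) r i"
      using IH i vn unfolding opp_vertices_exist_def by auto
    then have "is_opp_vertex n D (skip v (i + 1)) (skip v r) (skip v i)" by (rule is_opp_vertex_skip)
    moreover have "skip v (i + 1) = i + 1" "skip v i = i" using 3 unfolding skip_def by auto
    ultimately show ?thesis by auto
  next
    case 4
    then have "1 \<le> i - 1 \<and> i - 1 < n - 1" "(i - 1) + 1 = i" using i v2 by auto
    moreover from this(1) have "\<exists>r. is_opp_vertex (n - 1) (remove_ear v D) ((i - 1) + 1) r (i - 1)"
      using IH unfolding opp_vertices_exist_def by blast
    ultimately obtain r where "is_opp_vertex (n - 1) (remove_ear v D) i r (i - 1)" by auto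
    then have "is_opp_vertex n D (skip v i) (skip v r) (skip v (i - 1))" by (rule is_opp_vertex_skip)
    moreover have "skip v i = i + 1" "skip v (i - 1) = i" using 4 unfolding skip_def by auto
    ultimately show ?thesis by auto
  qed
qed

lemma opp_vertices_exist_remove_ear:
  assumes IH: "opp_vertices_exist (n - 1) (remove_ear v D)"
  shows "opp_vertices_exist n D"
proof -
  obtain r where "is_opp_vertex (n - 1) (remove_ear v D) 1 r (n - 1)"
    using IH unfolding opp_vertices_exist_def by auto
  then have "is_opp_vertex n D (skip v 1) (skip v r) (skip v (n - 1))" by (rule is_opp_vertex_skip)
  then have "is_opp_vertex n D 1 (skip v r) n" by (simp only: skip_1 skip_last)
  then show ?thesis unfolding opp_vertices_exist_def
    using opp_vertices_diag_remove_ear[OF IH] opp_vertex_side_remove_ear[OF IH] by blast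
qed

end

lemma opp_vertices_exist_3: "opp_vertices_exist 3 {}"
proof -
  have "{1, 2, 3::nat} \<in> tri_sets 3 {}" unfolding tri_sets_def is_tri_def is_edge_def by force
  moreover have "{2, 3, 1::nat} = {1, 2, 3}" "{3, 1, 2::nat} = {1, 2, 3}" by auto
  ultimately have opp: "is_opp_vertex 3 {} 2 3 1" "is_opp_vertex 3 {} 3 1 2" "is_opp_vertex 3 {} 1 2 3"
    unfolding is_opp_vertex_def cbetw_def by auto
  moreover have "\<exists>r. is_opp_vertex 3 {} (i + 1) r i" if "1 \<le> i" "i < 3" for i
  proof -
    have "i = 1 \<or> i = 2" using that by auto
    moreover have "is_opp_vertex 3 {} (1 + 1) 3 1" "is_opp_vertex 3 {} (2 + 1) 1 2"
      using opp(1,2) by (simp_all only: one_add_one numeral_plus_one semiring_norm)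
    ultimately show ?thesis by blast
  qed
  ultimately show ?thesis unfolding opp_vertices_exist_def using opp(3) by blast
qed

lemma triangulation_opp_vertices_exist: "n \<ge> 3 \<Longrightarrow> poly_triangulation n D \<Longrightarrow> opp_vertices_exist n D"
proof (induction n D rule: triangulation_induct)
  case triangle
  then show ?case by (rule opp_vertices_exist_3)
next
  case (ear n v D)
  then show ?case by (rule ear.opp_vertices_exist_remove_ear)
qed

lemma opp_vertex_eqI: "poly_triangulation n D \<Longrightarrow> is_opp_vertex n D p r q \<Longrightarrow> opp_vertex n D p q = r"
  unfolding opp_vertex_def using is_opp_vertex_unique unfolding is_opp_vertex_def by blast

lemma is_opp_vertex_opp_vertex:
  assumes "n \<ge> 3" "poly_triangulation n D" "(p, q) \<in> D \<or> (q, p) \<in> D"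
  shows "is_opp_vertex n D p (opp_vertex n D p q) q"
proof -
  obtain r where "is_opp_vertex n D p r q"
    using triangulation_opp_vertices_exist[OF assms(1,2)] assms(3) unfolding opp_vertices_exist_def by blast
  then show ?thesis using opp_vertex_eqI[OF assms(2)] by simp
qed

context ear
begin

lemma opp_vertex_skip:
  assumes "(a, b) \<in> remove_ear v D \<or> (b, a) \<in> remove_ear v D"
  shows "opp_vertex n D (skip v a) (skip v b) = skip v (opp_vertex (n - 1) (remove_ear v D) a b)"
proof -
  have "is_opp_vertex (n - 1) (remove_ear v D) a (opp_vertex (n - 1) (remove_ear v D) a b) b"
    using is_opp_vertex_opp_vertex[OF _ triangulation_remove_ear assms] n4 by auto
  from is_opp_vertex_skip[OF this] show ?thesis using opp_vertex_eqI[OF tri] by blast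
qed

lemma opp_vertex_ear: "opp_vertex n D (v - 1) (v + 1) = v"
  using opp_vertex_eqI[OF tri is_opp_vertex_ear_triangle(1)] .

lemma opp_vertex_ear_other:
  "opp_vertex n D (v + 1) (v - 1) \<in> {1..n}"
  "opp_vertex n D (v + 1) (v - 1) < v - 1 \<or> opp_vertex n D (v + 1) (v - 1) > v + 1"
proof -
  have "is_opp_vertex n D (v + 1) (opp_vertex n D (v + 1) (v - 1)) (v - 1)"
    using is_opp_vertex_opp_vertex[OF _ tri] ear n4 by auto
  then show "opp_vertex n D (v + 1) (v - 1) \<in> {1..n}"
    "opp_vertex n D (v + 1) (v - 1) < v - 1 \<or> opp_vertex n D (v + 1) (v - 1) > v + 1"
    using tri_setsD[of "v + 1" _ "v - 1" n D] unfolding is_opp_vertex_def cbetw_def by auto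
qed

lemma coord_skip_index:
  assumes "x \<in> Iset (n - 1) (remove_ear v D)"
  shows "coord n D c (skip_index v x) = coord (n - 1) (remove_ear v D) (c \<circ> skip v) x"
proof -
  consider (T) i j k where "x = Tri i j k"
    | (Dg) j k where "x = Dg j k" "(j, k) \<in> remove_ear v D \<or> (k, j) \<in> remove_ear v D"
    using assms unfolding Iset_def by blast
  then show ?thesis
  proof cases
    case T
    then show ?thesis by (simp add: pt_def ln_def)
  next
    case Dg
    then have "(k, j) \<in> remove_ear v D \<or> (j, k) \<in> remove_ear v D" by blast
    then show ?thesis using Dg opp_vertex_skip[of j k] opp_vertex_skip[of k j]
      by (simp add: pt_def ln_def Let_def)
  qed
qed

end

section \<open>Flags inscribed in a convex polygon\<close>

lemma pos_transfer:
  fixes a b x y w :: real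
  assumes "a > 0" "b > 0" "x * a = y * b" "w * y > 0"
  shows "w * x > 0"
proof -
  have "(w * x) * a = (w * y) * b" using assms(3) by (simp add: algebra_simps)
  also have "\<dots> > 0" using assms by simp
  finally show ?thesis using assms(1) by (simp add: zero_less_mult_iff)
qed

lemma det3_pos_by_pluecker:
  fixes s :: real
  assumes "s * s = 1"
    and "s * det3 X E W > 0" "s * det3 X E U > 0" "s * det3 X W Z > 0" "s * det3 X E Z > 0"
    "s * det3 X U W > 0"
  shows "s * det3 X U Z > 0"
proof -
  have "(s * det3 X E W) * (s * det3 X U Z) =
        (s * det3 X E U) * (s * det3 X W Z) + (s * det3 X E Z) * (s * det3 X U W)"
    using det3_pluecker[of X E W U Z] assms(1) by (simp add: algebra_simps)
  also have "\<dots> > 0" using assms(3-6) by (simp add: add_pos_pos)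
  finally show ?thesis using assms(2) zero_less_mult_pos by blast
qed

lemma cprev_range: "N \<ge> 1 \<Longrightarrow> i \<in> {1..N} \<Longrightarrow> cprev N i \<in> {1..N}"
  unfolding cprev_def by auto

lemma cprev_ge2: "i \<ge> 2 \<Longrightarrow> cprev N i = i - 1"
  unfolding cprev_def by auto

definition cyclic3 :: "nat \<Rightarrow> nat \<Rightarrow> nat \<Rightarrow> bool" where
  "cyclic3 x y z = ((x < y \<and> y < z) \<or> (y < z \<and> z < x) \<or> (z < x \<and> x < y))"

text \<open>The flags of \<open>c\<close> are, up to scale, \<open>(A i, L i)\<close>, where \<open>L i\<close> is the side of the convex
  polygon with vertices \<open>P 1, \<dots>, P N\<close> from \<open>P (i - 1)\<close> to \<open>P i\<close>, normalised to be positive on the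
  polygon, and \<open>A i\<close> lies in the interior of that side.\<close>
locale inscribed_polygon =
  fixes N :: nat and c :: config and P L A :: "nat \<Rightarrow> real^3"
  assumes N3: "N \<ge> 3"
    and side_prev: "i \<in> {1..N} \<Longrightarrow> L i \<bullet> P (cprev N i) = 0"
    and side_cur: "i \<in> {1..N} \<Longrightarrow> L i \<bullet> P i = 0"
    and side_pos: "i \<in> {1..N} \<Longrightarrow> j \<in> {1..N} \<Longrightarrow> j \<noteq> cprev N i \<Longrightarrow> j \<noteq> i \<Longrightarrow> L i \<bullet> P j > 0"
    and flag_on_side: "i \<in> {1..N} \<Longrightarrow> \<exists>s t. s > 0 \<and> t > 0 \<and> A i = s *\<^sub>R P (cprev N i) + t *\<^sub>R P i"
    and ln_scale: "i \<in> {1..N} \<Longrightarrow> \<exists>e. e \<noteq> 0 \<and> ln c i = e *\<^sub>R L i"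
    and pt_scale: "i \<in> {1..N} \<Longrightarrow> \<exists>r. r \<noteq> 0 \<and> pt c i = r *\<^sub>R A i"
begin

lemma side_vertex_nonneg: "i \<in> {1..N} \<Longrightarrow> j \<in> {1..N} \<Longrightarrow> L i \<bullet> P j \<ge> 0"
  using side_prev side_cur side_pos by (metis order.refl less_imp_le)

lemma exists_side_avoiding:
  assumes "j \<in> {1..N}"
  shows "\<exists>m\<in>{1..N}. j \<noteq> cprev N m \<and> j \<noteq> m"
proof (cases "j = 1")
  case True
  then show ?thesis using N3 by (intro bexI[of _ 3]) (auto simp: cprev_def)
next
  case False
  then show ?thesis using N3 assms by (intro bexI[of _ "j - 1"]) (auto simp: cprev_def)
qed

lemma vertex_nonzero: "j \<in> {1..N} \<Longrightarrow> P j \<noteq> 0"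
  using exists_side_avoiding side_pos by (metis inner_zero_right less_irrefl)

lemma det3_side_exchange:
  assumes "i \<in> {2..N}"
  shows "det3 (P (i - 1)) (P i) Z * (L i \<bullet> W) = det3 (P (i - 1)) (P i) W * (L i \<bullet> Z)"
proof -
  have "L i \<bullet> P (i - 1) = 0" "L i \<bullet> P i = 0"
    using side_prev[of i] side_cur[of i] assms by (simp_all add: cprev_ge2)
  then show ?thesis using det3_exchange[of "P (i - 1)" "P i" Z "L i" W] by simp
qed

lemma det3_side_nonzero:
  assumes i: "i \<in> {2..N}" and j: "j \<in> {1..N}" "j \<noteq> i - 1" "j \<noteq> i"
  shows "det3 (P (i - 1)) (P i) (P j) \<noteq> 0"
proof
  assume z: "det3 (P (i - 1)) (P i) (P j) = 0"
  have "L i \<bullet> P j > 0" using side_pos[of i j] i j by (simp add: cprev_ge2)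
  then have "det3 (P (i - 1)) (P i) Z = 0" for Z using det3_side_exchange[OF i, of Z "P j"] z by simp
  from this[of "join (P (i - 1)) (P i)"] have "join (P (i - 1)) (P i) = 0"
    unfolding det3_join_self by simp
  then have "(L (i - 1) \<bullet> P (i - 1)) *\<^sub>R P i = (L (i - 1) \<bullet> P i) *\<^sub>R P (i - 1)"
    using join_join[of "P (i - 1)" "P i" "L (i - 1)"] by (simp add: join_def)
  moreover have "i - 1 \<in> {1..N}" "i \<noteq> cprev N (i - 1)" using i N3 unfolding cprev_def by auto
  then have "L (i - 1) \<bullet> P (i - 1) = 0" "L (i - 1) \<bullet> P i > 0" using side_cur side_pos i by auto
  ultimately show False using vertex_nonzero[of "i - 1"] \<open>i - 1 \<in> {1..N}\<close> by simp
qed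

definition orientation :: real where
  "orientation = sgn (det3 (P 1) (P 2) (P 3))"

lemma orientation_sign:
  "orientation = 1 \<or> orientation = -1" "orientation * orientation = 1"
  "orientation * det3 (P 1) (P 2) (P 3) > 0"
proof -
  have "det3 (P 1) (P 2) (P 3) \<noteq> 0" using det3_side_nonzero[of 2 3] N3 by simp
  then show "orientation = 1 \<or> orientation = -1" "orientation * orientation = 1"
    "orientation * det3 (P 1) (P 2) (P 3) > 0"
    unfolding orientation_def by (auto simp: sgn_real_def)
qed

text \<open>Since \<open>det3 (P (i - 1)) (P i)\<close> and \<open>L i\<close> are proportional covectors, \<open>det3 (P (i - 1)) (P i) (P j)\<close>
  has the same sign for all \<open>j\<close>; the triangle \<open>P (i - 1), P i, P (i + 1)\<close> links consecutive \<open>i\<close>.\<close>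
lemma det3_side_orientation:
  assumes "2 \<le> i" "i \<le> N" "j \<in> {1..N}" "j \<noteq> i - 1" "j \<noteq> i"
  shows "orientation * det3 (P (i - 1)) (P i) (P j) > 0"
  using assms
proof (induction i arbitrary: j rule: nat_induct_at_least)
  case base
  have "L 2 \<bullet> P 3 > 0" "L 2 \<bullet> P j > 0" using side_pos[of 2] N3 base by (auto simp: cprev_def)
  moreover have "det3 (P 1) (P 2) (P j) * (L 2 \<bullet> P 3) = det3 (P 1) (P 2) (P 3) * (L 2 \<bullet> P j)"
    using det3_side_exchange[of 2 "P j" "P 3"] N3 by simp
  ultimately show ?case by (intro pos_transfer[OF _ _ _ orientation_sign(3)]) simp_all
next
  case (Suc i)
  have "orientation * det3 (P (i - 1)) (P i) (P (Suc i)) > 0" using Suc by auto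
  then have prev: "orientation * det3 (P i) (P (Suc i)) (P (i - 1)) > 0" by (metis det3_rotate)
  have "Suc i \<in> {1..N}" "i - 1 \<in> {1..N}" "i - 1 \<noteq> cprev N (Suc i)" "i - 1 \<noteq> Suc i"
    using Suc by (auto simp: cprev_def)
  then have "L (Suc i) \<bullet> P (i - 1) > 0" "L (Suc i) \<bullet> P j > 0"
    using side_pos Suc by (auto simp: cprev_def)
  moreover have "det3 (P i) (P (Suc i)) (P j) * (L (Suc i) \<bullet> P (i - 1)) =
                 det3 (P i) (P (Suc i)) (P (i - 1)) * (L (Suc i) \<bullet> P j)"
    using det3_side_exchange[of "Suc i" "P j" "P (i - 1)"] Suc by simp
  ultimately show ?case using Suc.hyps by (intro pos_transfer[OF _ _ _ prev]) simp_all
qed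

lemma det3_vertices_orientation:
  assumes "1 \<le> a" "a < b" "b < w" "w \<le> N"
  shows "orientation * det3 (P a) (P b) (P w) > 0"
proof -
  from assms(3) have "Suc b \<le> w" by simp
  then show ?thesis using assms(4)
proof (induction w rule: nat_induct_at_least)
  case base
  have "orientation * det3 (P (Suc b - 1)) (P (Suc b)) (P a) > 0"
    using det3_side_orientation[of "Suc b" a] assms(1,2) base by auto
  then show ?case by (simp add: det3_rotate[of "P a"])
next
  case (Suc w)
  show ?case
  proof (cases "b = a + 1")
    case True
    then show ?thesis using det3_side_orientation[of "a + 1" "Suc w"] assms(1) Suc by auto
  next
    case False
    have "orientation * det3 (P (Suc w - 1)) (P (Suc w)) (P a) > 0"
      using det3_side_orientation[of "Suc w" a] assms(1,2) Suc by auto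
    then have "orientation * det3 (P a) (P w) (P (Suc w)) > 0" by (simp add: det3_rotate[of "P a"])
    moreover have "orientation * det3 (P a) (P (a + 1)) (P x) > 0" if "a + 1 < x" "x \<le> N" for x
      using det3_side_orientation[of "a + 1" x] assms(1) that by auto
    moreover have "orientation * det3 (P a) (P b) (P w) > 0" using Suc by simp
    ultimately show ?thesis
      using det3_pos_by_pluecker[OF orientation_sign(2), of "P a" "P (a + 1)" "P w" "P b" "P (Suc w)"]
        Suc.hyps Suc.prems assms False by simp
  qed
qed

qed

end

locale oriented_polygon = inscribed_polygon +
  assumes vertices_oriented: "1 \<le> x \<Longrightarrow> x < y \<Longrightarrow> y < z \<Longrightarrow> z \<le> N \<Longrightarrow> det3 (P x) (P y) (P z) > 0"

lemma (in inscribed_polygon) exists_oriented: "\<exists>P' L' A'. oriented_polygon N c P' L' A'"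
proof (cases "orientation = 1")
  case True
  then have "oriented_polygon N c P L A"
    using det3_vertices_orientation by unfold_locales fastforce
  then show ?thesis by blast
next
  case False
  then have neg: "orientation = -1" using orientation_sign(1) by blast
  have "oriented_polygon N c (\<lambda>i. - P i) (\<lambda>i. - L i) (\<lambda>i. - A i)"
  proof unfold_locales
    fix i assume i: "i \<in> {1..N}"
    obtain s t where "s > 0" "t > 0" "A i = s *\<^sub>R P (cprev N i) + t *\<^sub>R P i" using flag_on_side[OF i] by blast
    then show "\<exists>s t. s > 0 \<and> t > 0 \<and> - A i = s *\<^sub>R - P (cprev N i) + t *\<^sub>R - P i"
      by (intro exI[of _ s] exI[of _ t]) (simp add: algebra_simps)
    obtain e where "e \<noteq> 0" "ln c i = e *\<^sub>R L i" using ln_scale[OF i] by blast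
    then show "\<exists>e. e \<noteq> 0 \<and> ln c i = e *\<^sub>R - L i" by (intro exI[of _ "-e"]) simp
    obtain r where "r \<noteq> 0" "pt c i = r *\<^sub>R A i" using pt_scale[OF i] by blast
    then show "\<exists>r. r \<noteq> 0 \<and> pt c i = r *\<^sub>R - A i" by (intro exI[of _ "-r"]) simp
  next
    fix x y z :: nat assume "1 \<le> x" "x < y" "y < z" "z \<le> N"
    then have "orientation * det3 (P x) (P y) (P z) > 0" using det3_vertices_orientation by blast
    then show "det3 (- P x) (- P y) (- P z) > 0" using neg by (simp add: det3_expand algebra_simps)
  qed (use N3 side_prev side_cur side_pos in auto)
  then show ?thesis by blast
qed

lemma det3_convex_combinations_pos:
  fixes s1 s2 s3 t1 t2 t3 :: real
  assumes "s1 > 0" "s2 > 0" "s3 > 0" "t1 > 0" "t2 > 0" "t3 > 0"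
    and nonneg: "\<And>a b c. a \<in> {X0, X1} \<Longrightarrow> b \<in> {Y0, Y1} \<Longrightarrow> c \<in> {Z0, Z1} \<Longrightarrow> det3 a b c \<ge> 0"
    and pos: "det3 X1 Y1 Z1 > 0"
  shows "det3 (s1 *\<^sub>R X0 + t1 *\<^sub>R X1) (s2 *\<^sub>R Y0 + t2 *\<^sub>R Y1) (s3 *\<^sub>R Z0 + t3 *\<^sub>R Z1) > 0"
proof -
  have nonneg_term: "u * v * w * det3 a b c \<ge> 0"
    if "u \<in> {s1, t1}" "v \<in> {s2, t2}" "w \<in> {s3, t3}" "a \<in> {X0, X1}" "b \<in> {Y0, Y1}" "c \<in> {Z0, Z1}"
    for u v w a b c
    using that assms(1-6) nonneg[of a b c] by (auto intro!: mult_nonneg_nonneg)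
  have "det3 (s1 *\<^sub>R X0 + t1 *\<^sub>R X1) (s2 *\<^sub>R Y0 + t2 *\<^sub>R Y1) (s3 *\<^sub>R Z0 + t3 *\<^sub>R Z1) =
     s1 * s2 * s3 * det3 X0 Y0 Z0 + s1 * s2 * t3 * det3 X0 Y0 Z1 +
     s1 * t2 * s3 * det3 X0 Y1 Z0 + s1 * t2 * t3 * det3 X0 Y1 Z1 +
     t1 * s2 * s3 * det3 X1 Y0 Z0 + t1 * s2 * t3 * det3 X1 Y0 Z1 +
     t1 * t2 * s3 * det3 X1 Y1 Z0 + t1 * t2 * t3 * det3 X1 Y1 Z1"
    by (simp add: det3_linear algebra_simps)
  moreover have "t1 * t2 * t3 * det3 X1 Y1 Z1 > 0" using assms(4-6) pos by simp
  ultimately show ?thesis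
    using nonneg_term[of s1 s2 s3 X0 Y0 Z0] nonneg_term[of s1 s2 t3 X0 Y0 Z1] nonneg_term[of s1 t2 s3 X0 Y1 Z0]
      nonneg_term[of s1 t2 t3 X0 Y1 Z1] nonneg_term[of t1 s2 s3 X1 Y0 Z0] nonneg_term[of t1 s2 t3 X1 Y0 Z1]
      nonneg_term[of t1 t2 s3 X1 Y1 Z0] by simp
qed

context oriented_polygon
begin

lemma det3_vertices_cyclic:
  "x \<in> {1..N} \<Longrightarrow> y \<in> {1..N} \<Longrightarrow> z \<in> {1..N} \<Longrightarrow> cyclic3 x y z \<Longrightarrow> det3 (P x) (P y) (P z) > 0"
  unfolding cyclic3_def using vertices_oriented det3_rotate by (metis atLeastAtMost_iff)

lemma det3_vertices_nonneg:
  assumes "a \<in> {1..N}" "b \<in> {1..N}" "c' \<in> {1..N}" "(a \<le> b \<and> b \<le> c') \<or> (a = N \<and> b \<le> c')"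
  shows "det3 (P a) (P b) (P c') \<ge> 0"
proof (cases "a = b \<or> b = c' \<or> a = c'")
  case True
  then show ?thesis using det3_repeated by auto
next
  case False
  then have "cyclic3 a b c'" using assms unfolding cyclic3_def by auto
  then show ?thesis using det3_vertices_cyclic assms by (simp add: less_imp_le)
qed

lemma side_flag_incident: "i \<in> {1..N} \<Longrightarrow> L i \<bullet> A i = 0"
  using flag_on_side side_prev side_cur by (fastforce simp: inner_add_right)

lemma side_flag_pos:
  assumes i: "i \<in> {1..N}" and j: "j \<in> {1..N}" and "i \<noteq> j"
  shows "L i \<bullet> A j > 0"
proof -
  obtain s t where st: "s > 0" "t > 0" "A j = s *\<^sub>R P (cprev N j) + t *\<^sub>R P j"
    using flag_on_side[OF j] by blast
  have cj: "cprev N j \<in> {1..N}" using cprev_range j N3 by auto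
  have "L i \<bullet> P (cprev N j) \<ge> 0" "L i \<bullet> P j \<ge> 0" using side_vertex_nonneg i j cj by auto
  moreover have "L i \<bullet> P (cprev N j) > 0 \<or> L i \<bullet> P j > 0"
  proof (cases "j = cprev N i")
    case True
    then have "cprev N j \<noteq> cprev N i" "cprev N j \<noteq> i" using i N3 \<open>i \<noteq> j\<close> unfolding cprev_def by auto
    then show ?thesis using side_pos[OF i cj] by auto
  next
    case False
    then show ?thesis using side_pos[OF i j] \<open>i \<noteq> j\<close> by auto
  qed
  ultimately show ?thesis using st by (auto simp: inner_add_right intro: add_pos_nonneg add_nonneg_pos)
qed

lemma det3_flag_points_pos:
  assumes o: "1 \<le> x" "x < y" "y < z" "z \<le> N"
  shows "det3 (A x) (A y) (A z) > 0"
proof -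
  have r: "x \<in> {1..N}" "y \<in> {1..N}" "z \<in> {1..N}" using o by auto
  have "cprev N y = y - 1" "cprev N z = z - 1" using o by (auto simp: cprev_def)
  then obtain s1 t1 s2 t2 s3 t3 where st: "s1 > 0" "t1 > 0" "s2 > 0" "t2 > 0" "s3 > 0" "t3 > 0"
    "A x = s1 *\<^sub>R P (cprev N x) + t1 *\<^sub>R P x" "A y = s2 *\<^sub>R P (y - 1) + t2 *\<^sub>R P y"
    "A z = s3 *\<^sub>R P (z - 1) + t3 *\<^sub>R P z"
    using flag_on_side[OF r(1)] flag_on_side[OF r(2)] flag_on_side[OF r(3)] by auto
  have x': "cprev N x \<in> {1..N}" "cprev N x = N \<or> cprev N x = x - 1"
    using cprev_range r N3 unfolding cprev_def by auto
  have "det3 (P a) (P b) (P c) \<ge> 0" if "a \<in> {cprev N x, x}" "b \<in> {y - 1, y}" "c \<in> {z - 1, z}"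
    for a b c
  proof -
    have "a \<in> {1..N}" "b \<in> {1..N}" "c \<in> {1..N}" using that x' r o by auto
    moreover have "(a \<le> b \<and> b \<le> c) \<or> (a = N \<and> b \<le> c)" using that x' o by auto
    ultimately show ?thesis using det3_vertices_nonneg by blast
  qed
  then have "det3 a b c \<ge> 0"
    if "a \<in> {P (cprev N x), P x}" "b \<in> {P (y - 1), P y}" "c \<in> {P (z - 1), P z}" for a b c
    using that by blast
  then show ?thesis unfolding st(7-9)
    by (intro det3_convex_combinations_pos) (use st vertices_oriented[OF o] in auto)
qed

end

locale flag_config =
  fixes N :: nat and c :: config and A L :: "nat \<Rightarrow> real^3"
  assumes N3: "N \<ge> 3"
    and pt_scale: "i \<in> {1..N} \<Longrightarrow> \<exists>r. r \<noteq> 0 \<and> pt c i = r *\<^sub>R A i"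
    and ln_scale: "i \<in> {1..N} \<Longrightarrow> \<exists>e. e \<noteq> 0 \<and> ln c i = e *\<^sub>R L i"
    and incident: "i \<in> {1..N} \<Longrightarrow> L i \<bullet> A i = 0"
    and ln_pt_pos: "i \<in> {1..N} \<Longrightarrow> j \<in> {1..N} \<Longrightarrow> j \<noteq> i \<Longrightarrow> L i \<bullet> A j > 0"
    and det3_pos: "1 \<le> x \<Longrightarrow> x < y \<Longrightarrow> y < z \<Longrightarrow> z \<le> N \<Longrightarrow> det3 (A x) (A y) (A z) > 0"

definition convex_flags :: "nat \<Rightarrow> config \<Rightarrow> bool" where
  "convex_flags N c = (\<exists>A L. flag_config N c A L)"

lemma (in oriented_polygon) flag_config_polygon: "flag_config N c A L"
  using N3 pt_scale ln_scale side_flag_incident side_flag_pos det3_flag_points_pos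
  by unfold_locales auto

lemma (in oriented_polygon) convex_flags: "convex_flags N c"
  unfolding convex_flags_def using flag_config_polygon by blast

lemma Pconf_inscribed_polygon:
  assumes N: "N \<ge> 3" and c: "c \<in> Pconf N"
  shows "\<exists>P L A. inscribed_polygon N c P L A"
proof -
  have "\<exists>h P. (\<forall>i\<in>{1..N}. h \<bullet> P i = 1) \<and> (\<forall>i\<in>{1..N}.
      ln c i \<bullet> P (cprev N i) = 0 \<and> ln c i \<bullet> P i = 0 \<and>
      ((\<forall>j\<in>{1..N} - {cprev N i, i}. ln c i \<bullet> P j > 0) \<or> (\<forall>j\<in>{1..N} - {cprev N i, i}. ln c i \<bullet> P j < 0)) \<and>
      (\<exists>s t r. r \<noteq> 0 \<and> s > 0 \<and> t > 0 \<and> r *\<^sub>R pt c i = s *\<^sub>R P (cprev N i) + t *\<^sub>R P i))"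
    using c unfolding Pconf_def mem_Collect_eq .
  then obtain h P where cond: "\<forall>i\<in>{1..N}. ln c i \<bullet> P (cprev N i) = 0 \<and> ln c i \<bullet> P i = 0 \<and>
      ((\<forall>j\<in>{1..N} - {cprev N i, i}. ln c i \<bullet> P j > 0) \<or> (\<forall>j\<in>{1..N} - {cprev N i, i}. ln c i \<bullet> P j < 0)) \<and>
      (\<exists>s t r. r \<noteq> 0 \<and> s > 0 \<and> t > 0 \<and> r *\<^sub>R pt c i = s *\<^sub>R P (cprev N i) + t *\<^sub>R P i)"
    by (elim exE conjE)
  have "\<forall>i\<in>{1..N}. \<exists>X. (\<exists>s t. s > 0 \<and> t > 0 \<and> X = s *\<^sub>R P (cprev N i) + t *\<^sub>R P i) \<and>
      (\<exists>r. r \<noteq> 0 \<and> pt c i = r *\<^sub>R X)"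
  proof
    fix i assume "i \<in> {1..N}"
    then obtain s t r where str: "r \<noteq> 0" "s > 0" "t > 0" "r *\<^sub>R pt c i = s *\<^sub>R P (cprev N i) + t *\<^sub>R P i"
      using cond by blast
    then have "\<exists>s t. s > 0 \<and> t > 0 \<and> r *\<^sub>R pt c i = s *\<^sub>R P (cprev N i) + t *\<^sub>R P i" by blast
    moreover have "\<exists>r'. r' \<noteq> 0 \<and> pt c i = r' *\<^sub>R (r *\<^sub>R pt c i)"
      using str(1) by (intro exI[of _ "1 / r"]) simp
    ultimately show "\<exists>X. (\<exists>s t. s > 0 \<and> t > 0 \<and> X = s *\<^sub>R P (cprev N i) + t *\<^sub>R P i) \<and>
        (\<exists>r. r \<noteq> 0 \<and> pt c i = r *\<^sub>R X)" by blast
  qed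
  then obtain A where A: "\<forall>i\<in>{1..N}. (\<exists>s t. s > 0 \<and> t > 0 \<and> A i = s *\<^sub>R P (cprev N i) + t *\<^sub>R P i) \<and>
      (\<exists>r. r \<noteq> 0 \<and> pt c i = r *\<^sub>R A i)"
    by (rule bchoice[THEN exE]) blast
  define sign where "sign i = (if \<forall>j\<in>{1..N} - {cprev N i, i}. ln c i \<bullet> P j > 0 then 1 else - 1 :: real)"
    for i
  have "inscribed_polygon N c P (\<lambda>i. sign i *\<^sub>R ln c i) A"
  proof unfold_locales
    fix i assume i: "i \<in> {1..N}"
    show "sign i *\<^sub>R ln c i \<bullet> P (cprev N i) = 0" "sign i *\<^sub>R ln c i \<bullet> P i = 0" using cond i by auto
    show "\<exists>s t. s > 0 \<and> t > 0 \<and> A i = s *\<^sub>R P (cprev N i) + t *\<^sub>R P i" "\<exists>r. r \<noteq> 0 \<and> pt c i = r *\<^sub>R A i"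
      using A i by auto
    show "\<exists>e. e \<noteq> 0 \<and> ln c i = e *\<^sub>R (sign i *\<^sub>R ln c i)"
      by (intro exI[of _ "sign i"]) (simp add: sign_def)
  next
    fix i j assume i: "i \<in> {1..N}" and "j \<in> {1..N}" "j \<noteq> cprev N i" "j \<noteq> i"
    then have "j \<in> {1..N} - {cprev N i, i}" by simp
    moreover have "(\<forall>j\<in>{1..N} - {cprev N i, i}. ln c i \<bullet> P j > 0) \<or>
        (\<forall>j\<in>{1..N} - {cprev N i, i}. ln c i \<bullet> P j < 0)" using cond i by blast
    ultimately show "sign i *\<^sub>R ln c i \<bullet> P j > 0" unfolding sign_def by auto
  qed (rule N)
  then show ?thesis by blast
qed

lemma (in inscribed_polygon) exists_chart: "\<exists>h. \<forall>j\<in>{1..N}. h \<bullet> P j > 0"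
proof (intro exI ballI)
  fix j assume j: "j \<in> {1..N}"
  obtain m where m: "m \<in> {1..N}" "j \<noteq> cprev N m" "j \<noteq> m" using exists_side_avoiding[OF j] by blast
  have "(\<Sum>i\<in>{1..N}. L i \<bullet> P j) > 0"
    by (rule sum_pos2[of _ m]) (use m side_pos[OF m(1) j m(2) m(3)] side_vertex_nonneg j in auto)
  then show "(\<Sum>i\<in>{1..N}. L i) \<bullet> P j > 0" by (simp add: inner_sum_left)
qed

lemma (in inscribed_polygon) in_Pconf: "c \<in> Pconf N"
proof -
  obtain h where h: "\<forall>j\<in>{1..N}. h \<bullet> P j > 0" using exists_chart by blast
  define P' where "P' j = (1 / (h \<bullet> P j)) *\<^sub>R P j" for j
  have P: "P j = (h \<bullet> P j) *\<^sub>R P' j" if "j \<in> {1..N}" for j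
  proof -
    have "h \<bullet> P j > 0" using h that by blast
    then show ?thesis unfolding P'_def by simp
  qed
  show ?thesis unfolding Pconf_def
  proof (intro CollectI exI[of _ h] exI[of _ P'] conjI ballI)
    fix i assume i: "i \<in> {1..N}"
    then have "h \<bullet> P i > 0" using h by blast
    then show "h \<bullet> P' i = 1" unfolding P'_def by simp
    obtain e where e: "e \<noteq> 0" "ln c i = e *\<^sub>R L i" using ln_scale[OF i] by blast
    show "ln c i \<bullet> P' (cprev N i) = 0" "ln c i \<bullet> P' i = 0"
      using side_prev[OF i] side_cur[OF i] e unfolding P'_def by simp_all
    have eq: "ln c i \<bullet> P' j = e * ((L i \<bullet> P j) / (h \<bullet> P j))" for j using e(2) unfolding P'_def by simp
    have pos: "(L i \<bullet> P j) / (h \<bullet> P j) > 0" if "j \<in> {1..N} - {cprev N i, i}" for j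
      using side_pos[OF i] h that by auto
    show "(\<forall>j\<in>{1..N} - {cprev N i, i}. ln c i \<bullet> P' j > 0) \<or>
        (\<forall>j\<in>{1..N} - {cprev N i, i}. ln c i \<bullet> P' j < 0)"
    proof (cases "e > 0")
      case True
      then have "\<forall>j\<in>{1..N} - {cprev N i, i}. ln c i \<bullet> P' j > 0"
        unfolding eq using pos by (blast intro: mult_pos_pos)
      then show ?thesis ..
    next
      case False
      then have "e < 0" using e(1) by simp
      then have "\<forall>j\<in>{1..N} - {cprev N i, i}. ln c i \<bullet> P' j < 0"
        unfolding eq using pos by (blast intro: mult_neg_pos)
      then show ?thesis ..
    qed
    obtain s t where st: "s > 0" "t > 0" "A i = s *\<^sub>R P (cprev N i) + t *\<^sub>R P i"
      using flag_on_side[OF i] by blast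
    obtain r where r: "r \<noteq> 0" "pt c i = r *\<^sub>R A i" using pt_scale[OF i] by blast
    have ci: "cprev N i \<in> {1..N}" using cprev_range i N3 by auto
    define hc hi where "hc = h \<bullet> P (cprev N i)" and "hi = h \<bullet> P i"
    have "(1 / r) *\<^sub>R pt c i = s *\<^sub>R P (cprev N i) + t *\<^sub>R P i" using r st by simp
    also have "\<dots> = (s * hc) *\<^sub>R P' (cprev N i) + (t * hi) *\<^sub>R P' i"
      unfolding hc_def hi_def by (subst P[OF ci], subst P[OF i]) simp
    finally have "(1 / r) *\<^sub>R pt c i = (s * hc) *\<^sub>R P' (cprev N i) + (t * hi) *\<^sub>R P' i" .
    moreover have "s * hc > 0" "t * hi > 0" using st h ci i unfolding hc_def hi_def by auto
    ultimately show "\<exists>s t r. r \<noteq> 0 \<and> s > 0 \<and> t > 0 \<and> r *\<^sub>R pt c i = s *\<^sub>R P' (cprev N i) + t *\<^sub>R P' i"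
      using r(1) by (intro exI[of _ "s * hc"] exI[of _ "t * hi"] exI[of _ "1 / r"]) simp
  qed
qed

lemma Pconf_oriented_polygon: "N \<ge> 3 \<Longrightarrow> c \<in> Pconf N \<Longrightarrow> \<exists>P L A. oriented_polygon N c P L A"
  using Pconf_inscribed_polygon inscribed_polygon.exists_oriented by blast

lemma Pconf_convex_flags: "N \<ge> 3 \<Longrightarrow> c \<in> Pconf N \<Longrightarrow> convex_flags N c"
  using Pconf_oriented_polygon oriented_polygon.convex_flags by blast

section \<open>Invariance and positivity of the coordinates\<close>

definition coord_labels :: "nat \<Rightarrow> (nat \<times> nat) set \<Rightarrow> coord_index \<Rightarrow> nat set" where
  "coord_labels n D x = (case x of Tri i j k \<Rightarrow> {i, j, k}
     | Dg p q \<Rightarrow> {p, q, opp_vertex n D p q, opp_vertex n D q p})"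

lemma coord_labels_range:
  assumes N: "N \<ge> 3" and tri: "poly_triangulation N D" and x: "x \<in> Iset N D"
  shows "coord_labels N D x \<subseteq> {1..N}"
proof -
  consider (T) i j k where "x = Tri i j k" "is_tri N D i j k"
    | (Dg) p q where "x = Dg p q" "(p, q) \<in> D \<or> (q, p) \<in> D"
    using x unfolding Iset_def by blast
  then show ?thesis
  proof cases
    case T
    then show ?thesis unfolding coord_labels_def is_tri_def by auto
  next
    case Dg
    then have "is_opp_vertex N D p (opp_vertex N D p q) q" "is_opp_vertex N D q (opp_vertex N D q p) p"
      using is_opp_vertex_opp_vertex[OF N tri] by blast+
    then show ?thesis using tri_setsD[of p _ q N D] tri_setsD[of q _ p N D]
      unfolding coord_labels_def Dg is_opp_vertex_def by auto
  qed
qed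

lemma coord_rescale:
  assumes "\<forall>i\<in>coord_labels n D x. \<exists>r e. r \<noteq> 0 \<and> e \<noteq> 0 \<and> pt c' i = r *\<^sub>R pt c i \<and> ln c' i = e *\<^sub>R ln c i"
  shows "coord n D c' x = coord n D c x"
proof (cases x)
  case (Tri i j k)
  then have l: "i \<in> coord_labels n D x" "j \<in> coord_labels n D x" "k \<in> coord_labels n D x"
    unfolding coord_labels_def by auto
  obtain r1 e1 where 1: "r1 \<noteq> 0" "e1 \<noteq> 0" "pt c' i = r1 *\<^sub>R pt c i" "ln c' i = e1 *\<^sub>R ln c i"
    using assms l by blast
  obtain r2 e2 where 2: "r2 \<noteq> 0" "e2 \<noteq> 0" "pt c' j = r2 *\<^sub>R pt c j" "ln c' j = e2 *\<^sub>R ln c j"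
    using assms l by blast
  obtain r3 e3 where 3: "r3 \<noteq> 0" "e3 \<noteq> 0" "pt c' k = r3 *\<^sub>R pt c k" "ln c' k = e3 *\<^sub>R ln c k"
    using assms l by blast
  show ?thesis unfolding Tri coord.simps 1(3,4) 2(3,4) 3(3,4)
    by (rule triple_ratio_scaleR) (use 1 2 3 in auto)
next
  case (Dg p q)
  define k m where "k = opp_vertex n D p q" and "m = opp_vertex n D q p"
  have l: "p \<in> coord_labels n D x" "q \<in> coord_labels n D x" "k \<in> coord_labels n D x"
    "m \<in> coord_labels n D x"
    unfolding coord_labels_def Dg k_def m_def by auto
  obtain r1 e1 where 1: "r1 \<noteq> 0" "e1 \<noteq> 0" "pt c' p = r1 *\<^sub>R pt c p" "ln c' p = e1 *\<^sub>R ln c p"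
    using assms l by blast
  obtain r2 r3 r4 where 2: "r2 \<noteq> 0" "pt c' q = r2 *\<^sub>R pt c q" "r3 \<noteq> 0" "pt c' k = r3 *\<^sub>R pt c k"
    "r4 \<noteq> 0" "pt c' m = r4 *\<^sub>R pt c m"
    using assms l by meson
  show ?thesis unfolding Dg coord.simps Let_def k_def[symmetric] m_def[symmetric] 1(3,4) 2(2,4,6) join_scaleR
    by (rule cross_ratio_lines_scaleR) (use 1 2 in auto)
qed

lemma inner_vector_matrix_inverse:
  fixes g gi :: "real^3^3" and l y :: "real^3"
  shows "gi ** g = mat 1 \<Longrightarrow> (l v* gi) \<bullet> (g *v y) = l \<bullet> y"
  by (simp add: dot_lmul_matrix matrix_vector_mul_assoc)

lemma coord_matrix_action:
  fixes g gi :: "real^3^3"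
  assumes ginv: "g ** gi = mat 1" "gi ** g = mat 1"
    and act: "\<forall>i\<in>coord_labels n D x. pt c' i = g *v pt c i \<and> ln c' i = ln c i v* gi"
    and flag: "\<And>p q. x = Dg p q \<Longrightarrow> ln c p \<bullet> pt c p = 0 \<and> pt c p \<noteq> 0"
  shows "coord n D c' x = coord n D c x"
proof (cases x)
  case (Tri i j k)
  then have "i \<in> coord_labels n D x" "j \<in> coord_labels n D x" "k \<in> coord_labels n D x"
    unfolding coord_labels_def by auto
  with act have "pt c' l = g *v pt c l \<and> ln c' l = ln c l v* gi" if "l \<in> {i, j, k}" for l
    using that by blast
  then show ?thesis unfolding Tri coord.simps triple_ratio_def
    using inner_vector_matrix_inverse[OF ginv(2)] by simp
next
  case (Dg p q)
  define k m where "k = opp_vertex n D p q" and "m = opp_vertex n D q p"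
  have "p \<in> coord_labels n D x" "q \<in> coord_labels n D x" "k \<in> coord_labels n D x" "m \<in> coord_labels n D x"
    unfolding coord_labels_def Dg k_def m_def by auto
  then have act': "pt c' p = g *v pt c p" "ln c' p = ln c p v* gi" "pt c' q = g *v pt c q"
    "pt c' k = g *v pt c k" "pt c' m = g *v pt c m"
    using act by auto
  have inc: "ln c p \<bullet> pt c p = 0" "pt c p \<noteq> 0" using flag Dg by auto
  have "ln c' p \<bullet> pt c' p = 0" using inc act' inner_vector_matrix_inverse[OF ginv(2)] by simp
  moreover have "pt c' p \<noteq> 0"
  proof
    assume "pt c' p = 0"
    then have "gi *v (g *v pt c p) = 0" using act' by simp
    then show False using inc ginv(2) by (simp add: matrix_vector_mul_assoc)
  qed
  ultimately have inc': "ln c' p \<bullet> pt c' p = 0" "pt c' p \<noteq> 0" by blast+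
  have "det g \<noteq> 0" using det_mul[of g gi] ginv(1) by (auto simp: det_I)
  have "coord n D c' x = ((ln c' p \<bullet> pt c' k) * det3 (pt c' p) (pt c' q) (pt c' m)) /
      ((ln c' p \<bullet> pt c' m) * det3 (pt c' p) (pt c' k) (pt c' q))"
    unfolding Dg coord.simps Let_def k_def[symmetric] m_def[symmetric] by (rule cross_ratio_lines_join[OF inc'])
  also have "\<dots> = ((ln c p \<bullet> pt c k) * det3 (pt c p) (pt c q) (pt c m)) /
      ((ln c p \<bullet> pt c m) * det3 (pt c p) (pt c k) (pt c q))"
    unfolding act' det3_matrix_vector_mult inner_vector_matrix_inverse[OF ginv(2)]
    by (rule divide_cancel_common_factor[of "det g"]) (use \<open>det g \<noteq> 0\<close> in auto)
  also have "\<dots> = coord n D c x"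
    unfolding Dg coord.simps Let_def k_def[symmetric] m_def[symmetric] by (rule cross_ratio_lines_join[OF inc, symmetric])
  finally show ?thesis .
qed

lemma cbetw_cyclic3: "cbetw p r q \<Longrightarrow> cyclic3 p r q"
  unfolding cbetw_def cyclic3_def by auto

lemma cyclic3_rotate: "cyclic3 x y z \<Longrightarrow> cyclic3 y z x"
  unfolding cyclic3_def by auto

context flag_config
begin

lemma det3_cyclic_pos:
  "x \<in> {1..N} \<Longrightarrow> y \<in> {1..N} \<Longrightarrow> z \<in> {1..N} \<Longrightarrow> cyclic3 x y z \<Longrightarrow> det3 (A x) (A y) (A z) > 0"
  unfolding cyclic3_def using det3_pos det3_rotate by (metis atLeastAtMost_iff)

lemma pt_nonzero:
  assumes "i \<in> {1..N}"
  shows "A i \<noteq> 0"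
proof -
  define j where "j = (if i = 1 then 2 else 1 :: nat)"
  have "j \<in> {1..N}" "j \<noteq> i" using N3 assms unfolding j_def by auto
  then show ?thesis using ln_pt_pos[of j i] assms by auto
qed

lemma ln_pt_nonzero:
  assumes "i \<in> {1..N}" "j \<in> {1..N}" "i \<noteq> j"
  shows "ln c i \<bullet> pt c j \<noteq> 0"
proof -
  obtain r where "r \<noteq> 0" "pt c j = r *\<^sub>R A j" using pt_scale assms(2) by blast
  moreover obtain e where "e \<noteq> 0" "ln c i = e *\<^sub>R L i" using ln_scale assms(1) by blast
  ultimately show ?thesis using ln_pt_pos[OF assms(1,2)] assms(3) by auto
qed

lemma ln_pt_incident:
  assumes "i \<in> {1..N}"
  shows "ln c i \<bullet> pt c i = 0 \<and> pt c i \<noteq> 0"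
proof -
  obtain r where "r \<noteq> 0" "pt c i = r *\<^sub>R A i" using pt_scale assms by blast
  moreover obtain e where "e \<noteq> 0" "ln c i = e *\<^sub>R L i" using ln_scale assms by blast
  ultimately show ?thesis using incident pt_nonzero assms by simp
qed

lemma det3_pts_nonzero:
  assumes "x \<in> {1..N}" "y \<in> {1..N}" "z \<in> {1..N}" "x \<noteq> y" "y \<noteq> z" "x \<noteq> z"
  shows "det3 (pt c x) (pt c y) (pt c z) \<noteq> 0"
proof -
  have "cyclic3 x y z \<or> cyclic3 y x z" using assms unfolding cyclic3_def by auto
  then have "det3 (A x) (A y) (A z) \<noteq> 0"
  proof
    assume "cyclic3 x y z"
    then show ?thesis using det3_cyclic_pos assms by fastforce
  next
    assume "cyclic3 y x z"
    then have "det3 (A y) (A x) (A z) > 0" using det3_cyclic_pos assms by blast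
    then show ?thesis using det3_swap12[of "A x" "A y" "A z"] by simp
  qed
  moreover obtain r1 where "r1 \<noteq> 0" "pt c x = r1 *\<^sub>R A x" using pt_scale assms by blast
  moreover obtain r2 where "r2 \<noteq> 0" "pt c y = r2 *\<^sub>R A y" using pt_scale assms by blast
  moreover obtain r3 where "r3 \<noteq> 0" "pt c z = r3 *\<^sub>R A z" using pt_scale assms by blast
  ultimately show ?thesis by (simp add: det3_scaleR)
qed

lemma coord_normalise:
  assumes "coord_labels N D x \<subseteq> {1..N}"
  shows "coord N D c x = coord N D (\<lambda>i. (A i, L i)) x"
proof (rule coord_rescale, intro ballI)
  fix i assume "i \<in> coord_labels N D x"
  then have i: "i \<in> {1..N}" using assms by blast
  obtain r where "r \<noteq> 0" "pt c i = r *\<^sub>R A i" using pt_scale[OF i] by blast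
  moreover obtain e where "e \<noteq> 0" "ln c i = e *\<^sub>R L i" using ln_scale[OF i] by blast
  ultimately show "\<exists>r e. r \<noteq> 0 \<and> e \<noteq> 0 \<and> pt c i = r *\<^sub>R pt (\<lambda>i. (A i, L i)) i \<and>
      ln c i = e *\<^sub>R ln (\<lambda>i. (A i, L i)) i"
    unfolding pt_def ln_def by auto
qed

lemma cross_ratio_normalised_pos:
  assumes "is_opp_vertex N D p k q" "is_opp_vertex N D q m p"
  shows "cross_ratio_lines (A p) (L p) (join (A p) (A k)) (join (A p) (A q)) (join (A p) (A m)) > 0"
proof -
  have range: "p \<in> {1..N}" "k \<in> {1..N}" "q \<in> {1..N}" "m \<in> {1..N}" and "p \<noteq> k" "p \<noteq> m"
    using tri_setsD[of p k q N D] tri_setsD[of q m p N D] assms unfolding is_opp_vertex_def by auto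
  moreover have "cyclic3 p k q" "cyclic3 p q m"
    using assms cbetw_cyclic3 cyclic3_rotate unfolding is_opp_vertex_def by blast+
  then have "det3 (A p) (A k) (A q) > 0" "det3 (A p) (A q) (A m) > 0" using det3_cyclic_pos range by blast+
  ultimately show ?thesis using cross_ratio_lines_join[OF incident pt_nonzero] ln_pt_pos
    by (simp add: divide_pos_pos)
qed

lemma coord_pos:
  assumes tri: "poly_triangulation N D" and x: "x \<in> Iset N D"
  shows "coord N D c x > 0"
proof -
  have "coord N D (\<lambda>i. (A i, L i)) x > 0"
  proof -
    consider (T) i j k where "x = Tri i j k" "is_tri N D i j k"
      | (Dg) p q where "x = Dg p q" "(p, q) \<in> D \<or> (q, p) \<in> D"
      using x unfolding Iset_def by blast
    then show ?thesis
    proof cases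
      case T
      then have "i \<in> {1..N}" "j \<in> {1..N}" "k \<in> {1..N}" "i \<noteq> j" "j \<noteq> k" "i \<noteq> k"
        unfolding is_tri_def by auto
      then show ?thesis unfolding T coord.simps triple_ratio_def pt_def ln_def
        using ln_pt_pos by (simp add: divide_pos_pos)
    next
      case Dg
      then have "is_opp_vertex N D p (opp_vertex N D p q) q" "is_opp_vertex N D q (opp_vertex N D q p) p"
        using is_opp_vertex_opp_vertex[OF N3 tri] by blast+
      then show ?thesis unfolding Dg coord.simps Let_def pt_def ln_def fst_conv snd_conv
        by (rule cross_ratio_normalised_pos)
    qed
  qed
  then show ?thesis using coord_normalise coord_labels_range[OF N3 tri x] by simp
qed

end

lemma convex_flags_coord_pos:
  "convex_flags N c \<Longrightarrow> poly_triangulation N D \<Longrightarrow> x \<in> Iset N D \<Longrightarrow> coord N D c x > 0"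
  unfolding convex_flags_def using flag_config.coord_pos by blast

definition pgl_related :: "nat \<Rightarrow> real^3^3 \<Rightarrow> config \<Rightarrow> config \<Rightarrow> bool" where
  "pgl_related n g c1 c2 = (\<forall>i\<in>{1..n}. \<exists>s u. s \<noteq> 0 \<and> u \<noteq> 0 \<and>
      pt c2 i = s *\<^sub>R (g *v pt c1 i) \<and> ln c1 i = u *\<^sub>R (ln c2 i v* g))"

lemma pgl_rel_iff:
  "(c, c') \<in> pgl_rel n \<longleftrightarrow> c \<in> Pconf n \<and> c' \<in> Pconf n \<and> (\<exists>g. invertible g \<and> pgl_related n g c c')"
  unfolding pgl_rel_def pgl_related_def by simp

lemma vector_matrix_inverse: "g ** gi = mat 1 \<Longrightarrow> (x v* g) v* gi = x" for g gi :: "real^3^3" and x :: "real^3"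
  by (simp add: vector_matrix_mul_assoc)

lemma coord_pgl_invariant:
  assumes N: "N \<ge> 3" and tri: "poly_triangulation N D" and conv: "convex_flags N c1"
    and g: "invertible g" and rel: "pgl_related N g c1 c2" and x: "x \<in> Iset N D"
  shows "coord N D c2 x = coord N D c1 x"
proof -
  obtain gi where gi: "g ** gi = mat 1" "gi ** g = mat 1" using g unfolding invertible_def by blast
  define c' where "c' = (\<lambda>i. (g *v pt c1 i, ln c1 i v* gi))"
  have labels: "coord_labels N D x \<subseteq> {1..N}" using coord_labels_range[OF N tri x] .
  have "coord N D c' x = coord N D c1 x"
  proof (rule coord_matrix_action[OF gi])
    show "\<forall>i\<in>coord_labels N D x. pt c' i = g *v pt c1 i \<and> ln c' i = ln c1 i v* gi"
      unfolding c'_def pt_def ln_def by simp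
  next
    fix p q assume "x = Dg p q"
    then have "p \<in> {1..N}" using labels unfolding coord_labels_def by auto
    then show "ln c1 p \<bullet> pt c1 p = 0 \<and> pt c1 p \<noteq> 0"
      using conv flag_config.ln_pt_incident unfolding convex_flags_def by blast
  qed
  moreover have "coord N D c2 x = coord N D c' x"
  proof (rule coord_rescale, intro ballI)
    fix i assume "i \<in> coord_labels N D x"
    then obtain s u where su: "s \<noteq> 0" "u \<noteq> 0" "pt c2 i = s *\<^sub>R (g *v pt c1 i)" "ln c1 i = u *\<^sub>R (ln c2 i v* g)"
      using rel labels unfolding pgl_related_def by blast
    then have "ln c' i = u *\<^sub>R ln c2 i" unfolding c'_def ln_def
      by (simp add: scaleR_vector_matrix_assoc vector_matrix_inverse[OF gi(1)])
    then show "\<exists>r e. r \<noteq> 0 \<and> e \<noteq> 0 \<and> pt c2 i = r *\<^sub>R pt c' i \<and> ln c2 i = e *\<^sub>R ln c' i"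
      using su unfolding c'_def pt_def by (intro exI[of _ s] exI[of _ "1 / u"]) simp
  qed
  ultimately show ?thesis by simp
qed

lemma convex_flags_skip:
  assumes "convex_flags N c" "N \<ge> 4" "2 \<le> v" "v \<le> N - 1"
  shows "convex_flags (N - 1) (c \<circ> skip v)"
proof -
  obtain A L where "flag_config N c A L" using assms(1) unfolding convex_flags_def by blast
  then interpret flag_config N c A L .
  have skip_range: "i \<in> {1..N - 1} \<Longrightarrow> skip v i \<in> {1..N}" for i unfolding skip_def by auto
  have "flag_config (N - 1) (c \<circ> skip v) (A \<circ> skip v) (L \<circ> skip v)"
  proof unfold_locales
    fix x y z assume "1 \<le> x" "x < y" "y < z" "z \<le> N - 1"
    then have "1 \<le> skip v x" "skip v x < skip v y" "skip v y < skip v z" "skip v z \<le> N"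
      unfolding skip_def by auto
    then show "det3 ((A \<circ> skip v) x) ((A \<circ> skip v) y) ((A \<circ> skip v) z) > 0" using det3_pos by simp
  qed (use assms(2) skip_range pt_scale ln_scale incident ln_pt_pos in \<open>auto simp: pt_def ln_def\<close>)
  then show ?thesis unfolding convex_flags_def by blast
qed

section \<open>Injectivity\<close>

lemma covector_eq_scaleR_if_ratios_eq:
  fixes X Y Z w l :: "real^3"
  assumes d: "det3 X Y Z \<noteq> 0" and "w \<bullet> X = 0" "l \<bullet> X = 0"
    and nz: "w \<bullet> Y \<noteq> 0" "w \<bullet> Z \<noteq> 0" "l \<bullet> Y \<noteq> 0" "l \<bullet> Z \<noteq> 0"
    and ratio: "(w \<bullet> Y) / (w \<bullet> Z) = (l \<bullet> Y) / (l \<bullet> Z)"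
  shows "\<exists>u. u \<noteq> 0 \<and> l = u *\<^sub>R w"
proof -
  define u where "u = (l \<bullet> Y) / (w \<bullet> Y)"
  have "l \<bullet> Z = u * (w \<bullet> Z)" using ratio nz unfolding u_def by (simp add: field_simps)
  then have "l - u *\<^sub>R w = 0"
    using eq_0_if_inner_basis_eq_0[OF d, of "l - u *\<^sub>R w"] assms(2,3) nz unfolding u_def
    by (simp add: inner_diff_right inner_commute)
  moreover have "u \<noteq> 0" using nz unfolding u_def by simp
  ultimately show ?thesis by (intro exI[of _ u]) simp
qed

text \<open>The two cross-ratios at the ends of the diagonal \<open>A B\<close> of the quadrilateral \<open>A C B M\<close>
  determine \<open>C\<close> up to scale: they fix the ratios \<open>a \<bullet> C : det3 A B C : b \<bullet> C\<close>.\<close>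
lemma point_eq_scaleR_if_cross_ratios_eq:
  fixes A B M C C' a b :: "real^3"
  assumes aA: "a \<bullet> A = 0" and bB: "b \<bullet> B = 0" and aB: "a \<bullet> B \<noteq> 0" and bA: "b \<bullet> A \<noteq> 0"
    and aM: "a \<bullet> M \<noteq> 0" and bM: "b \<bullet> M \<noteq> 0" and dM: "det3 A B M \<noteq> 0"
    and X: "(a \<bullet> C) * det3 A B M / ((a \<bullet> M) * det3 A C B) = (a \<bullet> C') * det3 A B M / ((a \<bullet> M) * det3 A C' B)"
    and Xp: "(a \<bullet> C) * det3 A B M / ((a \<bullet> M) * det3 A C B) > 0"
    and Y: "(b \<bullet> M) * det3 B A C / ((b \<bullet> C) * det3 B M A) = (b \<bullet> M) * det3 B A C' / ((b \<bullet> C') * det3 B M A)"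
    and Yp: "(b \<bullet> M) * det3 B A C / ((b \<bullet> C) * det3 B M A) > 0"
  shows "\<exists>l. l \<noteq> 0 \<and> C' = l *\<^sub>R C"
proof -
  define f where "f Z = det3 A B Z" for Z
  have f_swap: "det3 A Z B = - f Z" "det3 B A Z = - f Z" for Z
    unfolding f_def using det3_swap23 det3_swap12 by metis+
  have "(a \<bullet> C') * det3 A B M / ((a \<bullet> M) * det3 A C' B) > 0"
    "(b \<bullet> M) * det3 B A C' / ((b \<bullet> C') * det3 B M A) > 0" using X Xp Y Yp by simp_all
  then have nz: "a \<bullet> C \<noteq> 0" "f C \<noteq> 0" "a \<bullet> C' \<noteq> 0" "f C' \<noteq> 0" "b \<bullet> C \<noteq> 0" "b \<bullet> C' \<noteq> 0"
    using Xp Yp f_swap by auto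
  have "det3 B M A \<noteq> 0" using dM det3_rotate by metis
  then have "(a \<bullet> C) / f C = (a \<bullet> C') / f C'" "f C / (b \<bullet> C) = f C' / (b \<bullet> C')"
    using X Y aM bM dM nz unfolding f_swap by (simp_all add: field_simps)
  define l where "l = f C' / f C"
  have "a \<bullet> C' = l * (a \<bullet> C)" "b \<bullet> C' = l * (b \<bullet> C)" "f C' = l * f C"
    using \<open>(a \<bullet> C) / f C = (a \<bullet> C') / f C'\<close> \<open>f C / (b \<bullet> C) = f C' / (b \<bullet> C')\<close> nz
    unfolding l_def by (simp_all add: field_simps)
  moreover have "det3 a b (join A B) \<noteq> 0" unfolding det3_join_covectors using aA bB aB bA by simp
  ultimately have "C' - l *\<^sub>R C = 0"
    using eq_0_if_inner_basis_eq_0[of a b "join A B" "C' - l *\<^sub>R C"]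
    unfolding f_def det3_eq_inner_join by (simp add: inner_diff_right)
  moreover have "l \<noteq> 0" unfolding l_def using nz by simp
  ultimately show ?thesis by (intro exI[of _ l]) simp
qed

lemma covector_eq_scaleR_if_triple_ratios_eq:
  fixes A B C a b cc cc' :: "real^3"
  assumes "det3 A B C \<noteq> 0" "cc \<bullet> C = 0" "cc' \<bullet> C = 0"
    and T: "triple_ratio A a C cc B b = triple_ratio A a C cc' B b"
    and Tp: "triple_ratio A a C cc B b > 0"
  shows "\<exists>u. u \<noteq> 0 \<and> cc' = u *\<^sub>R cc"
proof (rule covector_eq_scaleR_if_ratios_eq[of C B A])
  show "det3 C B A \<noteq> 0" using assms(1) det3_rotate det3_swap12 by (metis neg_equal_0_iff_equal)
  have "triple_ratio A a C cc' B b > 0" using T Tp by simp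
  then show "cc \<bullet> B \<noteq> 0" "cc \<bullet> A \<noteq> 0" "cc' \<bullet> B \<noteq> 0" "cc' \<bullet> A \<noteq> 0"
    using Tp unfolding triple_ratio_def by auto
  moreover have "a \<bullet> C \<noteq> 0" "b \<bullet> C \<noteq> 0" "a \<bullet> B \<noteq> 0" "b \<bullet> A \<noteq> 0"
    using Tp unfolding triple_ratio_def by auto
  ultimately show "(cc \<bullet> B) / (cc \<bullet> A) = (cc' \<bullet> B) / (cc' \<bullet> A)"
    using T unfolding triple_ratio_def by (auto simp: field_simps)
qed (use assms(2,3) in auto)

context ear
begin

abbreviation ear_opp_vertex :: nat where
  "ear_opp_vertex \<equiv> opp_vertex n D (v + 1) (v - 1)"

lemma coord_ear_labels:
  "x \<in> {Tri (v - 1) v (v + 1), Dg (v - 1) (v + 1), Dg (v + 1) (v - 1)} \<Longrightarrow>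
   coord_labels n D x \<subseteq> {v - 1, v, v + 1, ear_opp_vertex}"
  using opp_vertex_ear unfolding coord_labels_def by auto

lemma coord_ear_diag:
  assumes "ln c (v - 1) \<bullet> pt c (v - 1) = 0" "pt c (v - 1) \<noteq> 0"
  shows "coord n D c (Dg (v - 1) (v + 1)) =
    (ln c (v - 1) \<bullet> pt c v) * det3 (pt c (v - 1)) (pt c (v + 1)) (pt c ear_opp_vertex) /
    ((ln c (v - 1) \<bullet> pt c ear_opp_vertex) * det3 (pt c (v - 1)) (pt c v) (pt c (v + 1)))"
  unfolding coord.simps Let_def opp_vertex_ear by (rule cross_ratio_lines_join[OF assms])

lemma coord_ear_diag_rev:
  assumes "ln c (v + 1) \<bullet> pt c (v + 1) = 0" "pt c (v + 1) \<noteq> 0"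
  shows "coord n D c (Dg (v + 1) (v - 1)) =
    (ln c (v + 1) \<bullet> pt c ear_opp_vertex) * det3 (pt c (v + 1)) (pt c (v - 1)) (pt c v) /
    ((ln c (v + 1) \<bullet> pt c v) * det3 (pt c (v + 1)) (pt c ear_opp_vertex) (pt c (v - 1)))"
  unfolding coord.simps Let_def opp_vertex_ear by (rule cross_ratio_lines_join[OF assms])

lemma tip_flag_unique:
  assumes conv: "convex_flags n c"
    and agree: "\<And>i. i \<in> {1..n} \<Longrightarrow> i \<noteq> v \<Longrightarrow> c' i = c i"
    and inc: "ln c' v \<bullet> pt c' v = 0"
    and eq: "\<And>x. x \<in> {Tri (v - 1) v (v + 1), Dg (v - 1) (v + 1), Dg (v + 1) (v - 1)} \<Longrightarrow>
      coord n D c' x = coord n D c x"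
  shows "(\<exists>l. l \<noteq> 0 \<and> pt c' v = l *\<^sub>R pt c v) \<and> (\<exists>u. u \<noteq> 0 \<and> ln c' v = u *\<^sub>R ln c v)"
proof -
  obtain A' L' where "flag_config n c A' L'" using conv unfolding convex_flags_def by blast
  then interpret flag_config n c A' L' .
  define m where "m = ear_opp_vertex"
  have range: "v - 1 \<in> {1..n}" "v \<in> {1..n}" "v + 1 \<in> {1..n}" "m \<in> {1..n}"
    and distinct: "m \<noteq> v - 1" "m \<noteq> v" "m \<noteq> v + 1" "v - 1 \<noteq> v" "v - 1 \<noteq> v + 1" "v \<noteq> v + 1"
    using v2 vn opp_vertex_ear_other unfolding m_def by auto
  define A B M C a b where "A = pt c (v - 1)" "B = pt c (v + 1)" "M = pt c m" "C = pt c v"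
    "a = ln c (v - 1)" "b = ln c (v + 1)"
  have same: "pt c' (v - 1) = A" "ln c' (v - 1) = a" "pt c' (v + 1) = B" "ln c' (v + 1) = b" "pt c' m = M"
    using agree range distinct unfolding A_B_M_C_a_b_def pt_def ln_def by auto
  have aA: "a \<bullet> A = 0" "A \<noteq> 0" and bB: "b \<bullet> B = 0" "B \<noteq> 0"
    using ln_pt_incident range unfolding A_B_M_C_a_b_def by auto
  have nz: "a \<bullet> B \<noteq> 0" "b \<bullet> A \<noteq> 0" "a \<bullet> M \<noteq> 0" "b \<bullet> M \<noteq> 0"
    using ln_pt_nonzero range distinct unfolding A_B_M_C_a_b_def by metis+
  have det: "det3 A B M \<noteq> 0" "det3 A B C \<noteq> 0"
    using det3_pts_nonzero range distinct unfolding A_B_M_C_a_b_def by metis+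
  have pos: "coord n D c x > 0" if "x \<in> {Tri (v - 1) v (v + 1), Dg (v - 1) (v + 1), Dg (v + 1) (v - 1)}" for x
    using coord_pos[OF tri] ear_coords_in_Iset that by auto
  obtain l where l: "l \<noteq> 0" "pt c' v = l *\<^sub>R C"
  proof -
    have "\<exists>l. l \<noteq> 0 \<and> pt c' v = l *\<^sub>R C"
    proof (rule point_eq_scaleR_if_cross_ratios_eq[OF aA(1) bB(1) nz det(1)])
      show "(a \<bullet> C) * det3 A B M / ((a \<bullet> M) * det3 A C B) =
          (a \<bullet> pt c' v) * det3 A B M / ((a \<bullet> M) * det3 A (pt c' v) B)"
        "(a \<bullet> C) * det3 A B M / ((a \<bullet> M) * det3 A C B) > 0"
        using eq[of "Dg (v - 1) (v + 1)"] pos[of "Dg (v - 1) (v + 1)"] coord_ear_diag[of c] coord_ear_diag[of c']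
          aA same unfolding A_B_M_C_a_b_def m_def by auto
      show "(b \<bullet> M) * det3 B A C / ((b \<bullet> C) * det3 B M A) =
          (b \<bullet> M) * det3 B A (pt c' v) / ((b \<bullet> pt c' v) * det3 B M A)"
        "(b \<bullet> M) * det3 B A C / ((b \<bullet> C) * det3 B M A) > 0"
        using eq[of "Dg (v + 1) (v - 1)"] pos[of "Dg (v + 1) (v - 1)"] coord_ear_diag_rev[of c]
          coord_ear_diag_rev[of c'] bB same unfolding A_B_M_C_a_b_def m_def by auto
    qed
    then show ?thesis using that by blast
  qed
  have "\<exists>u. u \<noteq> 0 \<and> ln c' v = u *\<^sub>R ln c v"
  proof (rule covector_eq_scaleR_if_triple_ratios_eq[OF det(2)])
    show "ln c v \<bullet> C = 0" using ln_pt_incident range unfolding A_B_M_C_a_b_def by blast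
    show "ln c' v \<bullet> C = 0" using inc l by simp
    have "triple_ratio A a C (ln c' v) B b = triple_ratio A a (pt c' v) (ln c' v) B b"
      using triple_ratio_scaleR[of 1 l 1 1 1 1 A a C "ln c' v" B b] l by simp
    then show "triple_ratio A a C (ln c v) B b = triple_ratio A a C (ln c' v) B b"
      "triple_ratio A a C (ln c v) B b > 0"
      using eq[of "Tri (v - 1) v (v + 1)"] pos[of "Tri (v - 1) v (v + 1)"] same
      unfolding A_B_M_C_a_b_def by auto
  qed
  then show ?thesis using l unfolding A_B_M_C_a_b_def by blast
qed

end

lemma (in ear) pgl_related_extend:
  assumes conv1: "convex_flags n c1" and conv2: "convex_flags n c2"
    and eq: "\<forall>x\<in>Iset n D. coord n D c1 x = coord n D c2 x"
    and g: "invertible g" and rel: "pgl_related (n - 1) g (c1 \<circ> skip v) (c2 \<circ> skip v)"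
  shows "pgl_related n g c1 c2"
proof -
  have n3: "n \<ge> 3" using n4 by simp
  obtain gi where gi: "g ** gi = mat 1" "gi ** g = mat 1" using g unfolding invertible_def by blast
  have off_tip: "\<exists>s u. s \<noteq> 0 \<and> u \<noteq> 0 \<and> pt c2 i = s *\<^sub>R (g *v pt c1 i) \<and> ln c1 i = u *\<^sub>R (ln c2 i v* g)"
    if "i \<in> {1..n}" "i \<noteq> v" for i
    using rel unskip_range[OF that] skip_unskip[OF that(2)] unfolding pgl_related_def pt_def ln_def
    by fastforce
  define c1' where "c1' i = (g *v pt c1 i, ln c1 i v* gi)" for i
  define c' where "c' i = (if i = v then c1' v else c2 i)" for i
  have "pgl_related n g c1 c1'"
    unfolding pgl_related_def c1'_def pt_def ln_def using vector_matrix_inverse[OF gi(2)]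
    by (auto intro!: exI[of _ 1])
  then have c1'_coord: "coord n D c1' x = coord n D c1 x" if "x \<in> Iset n D" for x
    using coord_pgl_invariant[OF n3 tri conv1 g _ that] by blast
  have "coord n D c' x = coord n D c2 x"
    if x: "x \<in> {Tri (v - 1) v (v + 1), Dg (v - 1) (v + 1), Dg (v + 1) (v - 1)}" for x
  proof -
    have "x \<in> Iset n D" using x ear_coords_in_Iset by auto
    have "coord n D c' x = coord n D c1' x"
    proof (rule coord_rescale, intro ballI)
      fix i assume "i \<in> coord_labels n D x"
      then have i: "i \<in> {1..n}" using coord_labels_range[OF n3 tri \<open>x \<in> Iset n D\<close>] by blast
      show "\<exists>r e. r \<noteq> 0 \<and> e \<noteq> 0 \<and> pt c' i = r *\<^sub>R pt c1' i \<and> ln c' i = e *\<^sub>R ln c1' i"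
      proof (cases "i = v")
        case True
        then show ?thesis unfolding c'_def pt_def ln_def by (intro exI[of _ 1]) simp
      next
        case False
        then obtain s u where "s \<noteq> 0" "u \<noteq> 0" "pt c2 i = s *\<^sub>R (g *v pt c1 i)" "ln c1 i = u *\<^sub>R (ln c2 i v* g)"
          using off_tip i by blast
        moreover have "ln c1 i v* gi = u *\<^sub>R ln c2 i" if "ln c1 i = u *\<^sub>R (ln c2 i v* g)"
          using that by (simp add: scaleR_vector_matrix_assoc vector_matrix_inverse[OF gi(1)])
        ultimately show ?thesis using False unfolding c'_def c1'_def pt_def ln_def
          by (intro exI[of _ s] exI[of _ "1 / u"]) simp
      qed
    qed
    also have "\<dots> = coord n D c2 x" using c1'_coord eq \<open>x \<in> Iset n D\<close> by simp
    finally show ?thesis .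
  qed
  moreover have "ln c' v \<bullet> pt c' v = 0"
    using conv1 flag_config.ln_pt_incident[of n c1 _ _ v] v2 vn inner_vector_matrix_inverse[OF gi(2)]
    unfolding convex_flags_def c'_def c1'_def pt_def ln_def by fastforce
  ultimately obtain l u where lu: "l \<noteq> 0" "pt c' v = l *\<^sub>R pt c2 v" "u \<noteq> 0" "ln c' v = u *\<^sub>R ln c2 v"
    using tip_flag_unique[OF conv2, of c'] unfolding c'_def by force
  have "ln c1 v = u *\<^sub>R (ln c2 v v* g)"
    using lu(4) vector_matrix_inverse[OF gi(2), of "ln c1 v"]
    by (simp add: c'_def c1'_def ln_def scaleR_vector_matrix_assoc)
  moreover have "pt c2 v = (1 / l) *\<^sub>R (g *v pt c1 v)" using lu(1,2) unfolding c'_def c1'_def pt_def by simp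
  ultimately show ?thesis using off_tip lu(1,3) unfolding pgl_related_def
    by (metis divide_eq_0_iff one_neq_zero)
qed

lemma exists_matrix_mapping:
  fixes Q1 Q2 Q3 P1 P2 P3 :: "real^3"
  assumes "det3 Q1 Q2 Q3 \<noteq> 0" "det3 P1 P2 P3 \<noteq> 0"
  shows "\<exists>g. invertible g \<and> g *v Q1 = P1 \<and> g *v Q2 = P2 \<and> g *v Q3 = P3"
proof -
  define col :: "real^3 \<Rightarrow> real^3 \<Rightarrow> real^3 \<Rightarrow> real^3^3" where "col u v w = transpose (vector [u, v, w])"
    for u v w
  have col_e: "col u v w *v vector [1, 0, 0] = u" "col u v w *v vector [0, 1, 0] = v"
    "col u v w *v vector [0, 0, 1] = w" for u v w
    unfolding col_def
    by (simp_all add: vec3_eq_iff matrix_vector_mult_def transpose_def vector_def sum_3)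
  have "invertible (col Q1 Q2 Q3)" "invertible (col P1 P2 P3)"
    unfolding invertible_det_nz col_def det_transpose using assms by (simp_all add: det3_def)
  then obtain Mi where Mi: "Mi ** col Q1 Q2 Q3 = mat 1" "invertible Mi"
    by (metis invertible_def invertible_left_inverse)
  define g where "g = col P1 P2 P3 ** Mi"
  have "g *v (col Q1 Q2 Q3 *v x) = col P1 P2 P3 *v x" for x
    unfolding g_def using Mi(1) by (simp add: matrix_vector_mul_assoc matrix_mul_assoc[symmetric])
  then show ?thesis using col_e invertible_mult[OF \<open>invertible (col P1 P2 P3)\<close> Mi(2)]
    unfolding g_def by metis
qed

lemma triple_ratio_scalars:
  fixes p q :: "nat \<Rightarrow> nat \<Rightarrow> real"
  assumes nz: "p 1 2 \<noteq> 0" "p 1 3 \<noteq> 0" "p 2 1 \<noteq> 0" "p 2 3 \<noteq> 0" "p 3 1 \<noteq> 0" "p 3 2 \<noteq> 0"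
    "q 1 2 \<noteq> 0" "q 1 3 \<noteq> 0" "q 2 1 \<noteq> 0" "q 2 3 \<noteq> 0" "q 3 1 \<noteq> 0" "q 3 2 \<noteq> 0"
    and T: "(q 1 2 * q 2 3 * q 3 1) / (q 1 3 * q 2 1 * q 3 2) = (p 1 2 * p 2 3 * p 3 1) / (p 1 3 * p 2 1 * p 3 2)"
  shows "\<exists>m1 m2 m3. m1 \<noteq> 0 \<and> m2 \<noteq> 0 \<and> m3 \<noteq> 0 \<and>
    (m2 * p 1 2) / (m3 * p 1 3) = q 1 2 / q 1 3 \<and> (m3 * p 2 3) / (m1 * p 2 1) = q 2 3 / q 2 1 \<and>
    (m1 * p 3 1) / (m2 * p 3 2) = q 3 1 / q 3 2"
proof (intro exI conjI)
  define k where "k i j l = (q i j / q i l) / (p i j / p i l)" for i j l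
  have "k 1 2 3 * k 2 3 1 * k 3 1 2 = 1" using T nz unfolding k_def by (simp add: field_simps)
  moreover have "k 1 2 3 \<noteq> 0" "k 2 3 1 \<noteq> 0" "k 3 1 2 \<noteq> 0" using nz unfolding k_def by auto
  ultimately show "(1 / k 3 1 2 * p 1 2) / (k 2 3 1 * p 1 3) = q 1 2 / q 1 3"
    "(k 2 3 1 * p 2 3) / (1 * p 2 1) = q 2 3 / q 2 1" "(1 * p 3 1) / (1 / k 3 1 2 * p 3 2) = q 3 1 / q 3 2"
    "(1::real) \<noteq> 0" "1 / k 3 1 2 \<noteq> 0" "k 2 3 1 \<noteq> 0"
    using nz unfolding k_def by (auto simp: field_simps)
qed

lemma pgl_related_triangle:
  assumes conv1: "convex_flags 3 c1" and conv2: "convex_flags 3 c2"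
    and T: "coord 3 D c1 (Tri 1 2 3) = coord 3 D c2 (Tri 1 2 3)"
  shows "\<exists>g. invertible g \<and> pgl_related 3 g c1 c2"
proof -
  obtain A1 L1 A2 L2 where fc: "flag_config 3 c1 A1 L1" "flag_config 3 c2 A2 L2"
    using conv1 conv2 unfolding convex_flags_def by blast
  define p q where "p i j = ln c2 i \<bullet> pt c2 j" and "q i j = ln c1 i \<bullet> pt c1 j" for i j
  have range: "(1::nat) \<in> {1..3}" "(2::nat) \<in> {1..3}" "(3::nat) \<in> {1..3}" by auto
  have pq_nz: "p i j \<noteq> 0" "q i j \<noteq> 0" if "i \<in> {1..3}" "j \<in> {1..3}" "i \<noteq> j" for i j
    using that flag_config.ln_pt_nonzero[OF fc(1)] flag_config.ln_pt_nonzero[OF fc(2)]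
    unfolding p_def q_def by blast+
  have "(q 1 2 * q 2 3 * q 3 1) / (q 1 3 * q 2 1 * q 3 2) = (p 1 2 * p 2 3 * p 3 1) / (p 1 3 * p 2 1 * p 3 2)"
    using T unfolding p_def q_def by (simp add: triple_ratio_def)
  moreover have "p 1 2 \<noteq> 0" "p 1 3 \<noteq> 0" "p 2 1 \<noteq> 0" "p 2 3 \<noteq> 0" "p 3 1 \<noteq> 0" "p 3 2 \<noteq> 0"
    "q 1 2 \<noteq> 0" "q 1 3 \<noteq> 0" "q 2 1 \<noteq> 0" "q 2 3 \<noteq> 0" "q 3 1 \<noteq> 0" "q 3 2 \<noteq> 0"
    using pq_nz by simp_all
  ultimately obtain m1 m2 m3 where m: "m1 \<noteq> 0" "m2 \<noteq> 0" "m3 \<noteq> 0"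
    "(m2 * p 1 2) / (m3 * p 1 3) = q 1 2 / q 1 3" "(m3 * p 2 3) / (m1 * p 2 1) = q 2 3 / q 2 1"
    "(m1 * p 3 1) / (m2 * p 3 2) = q 3 1 / q 3 2"
    using triple_ratio_scalars[of p q] by blast
  have "det3 (pt c1 1) (pt c1 2) (pt c1 3) \<noteq> 0" "det3 (pt c2 1) (pt c2 2) (pt c2 3) \<noteq> 0"
    using flag_config.det3_pts_nonzero[OF fc(1)] flag_config.det3_pts_nonzero[OF fc(2)] range by auto
  then have "det3 (m1 *\<^sub>R pt c2 1) (m2 *\<^sub>R pt c2 2) (m3 *\<^sub>R pt c2 3) \<noteq> 0"
    using m(1-3) by (simp add: det3_scaleR)
  then obtain g where g: "invertible g" "g *v pt c1 1 = m1 *\<^sub>R pt c2 1" "g *v pt c1 2 = m2 *\<^sub>R pt c2 2"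
    "g *v pt c1 3 = m3 *\<^sub>R pt c2 3"
    using exists_matrix_mapping \<open>det3 (pt c1 1) (pt c1 2) (pt c1 3) \<noteq> 0\<close> by blast
  define w where "w i = ln c2 i v* g" for i
  have w: "w i \<bullet> pt c1 1 = m1 * p i 1" "w i \<bullet> pt c1 2 = m2 * p i 2" "w i \<bullet> pt c1 3 = m3 * p i 3" for i
    unfolding w_def dot_lmul_matrix g p_def q_def by simp_all
  have incident: "p i i = 0" "q i i = 0" if "i \<in> {1..3}" for i
    using flag_config.ln_pt_incident[OF fc(1)] flag_config.ln_pt_incident[OF fc(2)] that
    unfolding p_def q_def by blast+
  have line: "\<exists>u. u \<noteq> 0 \<and> ln c1 i = u *\<^sub>R w i"
    if "(i, j, k) \<in> {(1, 2, 3), (2, 3, 1), (3, 1, 2)}" for i j k :: nat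
  proof (rule covector_eq_scaleR_if_ratios_eq[of "pt c1 i" "pt c1 j" "pt c1 k"])
    show "det3 (pt c1 i) (pt c1 j) (pt c1 k) \<noteq> 0"
      using that flag_config.det3_pts_nonzero[OF fc(1)] range by auto
  qed (use that w incident pq_nz m range in \<open>auto simp: p_def q_def\<close>)
  have related: "\<exists>s u. s \<noteq> 0 \<and> u \<noteq> 0 \<and> pt c2 i = s *\<^sub>R (g *v pt c1 i) \<and> ln c1 i = u *\<^sub>R (ln c2 i v* g)"
    if gi: "g *v pt c1 i = m *\<^sub>R pt c2 i" "m \<noteq> 0" and "\<exists>u. u \<noteq> 0 \<and> ln c1 i = u *\<^sub>R w i" for i m
  proof -
    obtain u where "u \<noteq> 0" "ln c1 i = u *\<^sub>R w i" using \<open>\<exists>u. u \<noteq> 0 \<and> ln c1 i = u *\<^sub>R w i\<close> by blast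
    then show ?thesis using gi unfolding w_def by (intro exI[of _ "1 / m"] exI[of _ u]) simp
  qed
  have "pgl_related 3 g c1 c2"
    unfolding pgl_related_def
  proof
    fix i :: nat assume "i \<in> {1..3}"
    then have "i = 1 \<or> i = 2 \<or> i = 3" by auto
    then show "\<exists>s u. s \<noteq> 0 \<and> u \<noteq> 0 \<and> pt c2 i = s *\<^sub>R (g *v pt c1 i) \<and> ln c1 i = u *\<^sub>R (ln c2 i v* g)"
      using related[OF g(2) m(1) line[of 1 2 3]] related[OF g(3) m(2) line[of 2 3 1]]
        related[OF g(4) m(3) line[of 3 1 2]] by auto
  qed
  then show ?thesis using g(1) by blast
qed

theorem pgl_related_if_coords_eq:
  "n \<ge> 3 \<Longrightarrow> poly_triangulation n D \<Longrightarrow> convex_flags n c1 \<Longrightarrow> convex_flags n c2 \<Longrightarrow>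
   \<forall>x\<in>Iset n D. coord n D c1 x = coord n D c2 x \<Longrightarrow> \<exists>g. invertible g \<and> pgl_related n g c1 c2"
proof (induction n D arbitrary: c1 c2 rule: triangulation_induct)
  case triangle
  have "Tri 1 2 3 \<in> Iset 3 {}" unfolding Iset_def is_tri_def is_edge_def by auto
  then show ?case using pgl_related_triangle triangle by blast
next
  case (ear n v D)
  interpret ear n v D by (rule ear.hyps)
  have "convex_flags (n - 1) (c1 \<circ> skip v)" "convex_flags (n - 1) (c2 \<circ> skip v)"
    using convex_flags_skip ear.prems(1,2) n4 v2 vn by blast+
  moreover have "\<forall>x\<in>Iset (n - 1) (remove_ear v D).
      coord (n - 1) (remove_ear v D) (c1 \<circ> skip v) x = coord (n - 1) (remove_ear v D) (c2 \<circ> skip v) x"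
    using coord_skip_index skip_index_in_Iset ear.prems(3) by metis
  ultimately obtain g where "invertible g" "pgl_related (n - 1) g (c1 \<circ> skip v) (c2 \<circ> skip v)"
    using ear.IH by blast
  then show ?case using pgl_related_extend ear.prems by blast
qed

section \<open>Surjectivity\<close>

lemma (in oriented_polygon) det3_vertices_cyclic_nonneg:
  "x \<in> {1..N} \<Longrightarrow> y \<in> {1..N} \<Longrightarrow> z \<in> {1..N} \<Longrightarrow> cyclic3 x y z \<or> x = y \<or> y = z \<or> x = z \<Longrightarrow>
   det3 (P x) (P y) (P z) \<ge> 0"
  using det3_vertices_cyclic det3_repeated by (auto intro: less_imp_le)

lemma (in oriented_polygon) det3_flags_vertex_neg:
  assumes "1 \<le> p" "p < N"
  shows "det3 (A p) (A (p + 1)) (P p) < 0"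
proof -
  have range: "p \<in> {1..N}" "p + 1 \<in> {1..N}" "cprev N p \<in> {1..N}" "cprev N (p + 1) = p"
    using assms N3 unfolding cprev_def by auto
  obtain s1 t1 where st1: "s1 > 0" "t1 > 0" "A p = s1 *\<^sub>R P (cprev N p) + t1 *\<^sub>R P p"
    using flag_on_side[OF range(1)] by blast
  obtain s2 t2 where st2: "s2 > 0" "t2 > 0" "A (p + 1) = s2 *\<^sub>R P p + t2 *\<^sub>R P (p + 1)"
    using flag_on_side[OF range(2)] range(4) by auto
  have "det3 (A p) (A (p + 1)) (P p) = - (s1 * t2 * det3 (P (cprev N p)) (P p) (P (p + 1)))"
    unfolding st1(3) st2(3) by (simp add: vec3_simps algebra_simps)
  moreover have "cyclic3 (cprev N p) p (p + 1)" using assms N3 unfolding cyclic3_def cprev_def by auto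
  then have "det3 (P (cprev N p)) (P p) (P (p + 1)) > 0" using det3_vertices_cyclic range by blast
  ultimately show ?thesis using st1 st2 by simp
qed

text \<open>In the basis \<open>A p, A (p + 1), P p\<close>, every vertex other than \<open>P p\<close> has coordinates whose
  signs make each term of \<open>det3_cramer\<close>, paired with \<open>cc\<close>, non-positive.\<close>
lemma (in oriented_polygon) cut_off_vertex_pos:
  assumes p: "1 \<le> p" "p < N"
    and cut: "cc \<bullet> A p > 0" "cc \<bullet> A (p + 1) > 0" "cc \<bullet> P p < 0"
    and j: "j \<in> {1..N}" "j \<noteq> p"
  shows "cc \<bullet> P j > 0"
proof -
  define q r where "q = p + 1" and "r = cprev N p"
  have range: "p \<in> {1..N}" "q \<in> {1..N}" "r \<in> {1..N}" and "r \<noteq> p" "r \<noteq> q" "cprev N q = p"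
    using p N3 unfolding q_def r_def cprev_def by auto
  obtain s1 t1 where st1: "s1 > 0" "t1 > 0" "A p = s1 *\<^sub>R P r + t1 *\<^sub>R P p"
    using flag_on_side[OF range(1)] unfolding r_def by blast
  obtain s2 t2 where st2: "s2 > 0" "t2 > 0" "A q = s2 *\<^sub>R P p + t2 *\<^sub>R P q"
    using flag_on_side[OF range(2)] \<open>cprev N q = p\<close> by auto
  note st = st1 st2
  have cyc: "j \<noteq> q \<Longrightarrow> cyclic3 p q j" "j \<noteq> r \<Longrightarrow> cyclic3 r p j"
    "j \<noteq> r \<Longrightarrow> j \<noteq> q \<Longrightarrow> cyclic3 r q j"
    using p j N3 unfolding q_def r_def cyclic3_def cprev_def by auto
  have nonneg: "det3 (P p) (P q) (P j) \<ge> 0" "det3 (P r) (P p) (P j) \<ge> 0" "det3 (P r) (P q) (P j) \<ge> 0"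
    using det3_vertices_cyclic_nonneg range j(1) cyc by blast+
  define K where "K = det3 (A p) (A q) (P p)"
  have K: "K < 0" unfolding K_def q_def using det3_flags_vertex_neg p by blast
  have "K *\<^sub>R P j = det3 (P j) (A q) (P p) *\<^sub>R A p + det3 (A p) (P j) (P p) *\<^sub>R A q +
      det3 (A p) (A q) (P j) *\<^sub>R P p"
    unfolding K_def by (rule det3_cramer)
  then have "cc \<bullet> (K *\<^sub>R P j) = cc \<bullet> (det3 (P j) (A q) (P p) *\<^sub>R A p + det3 (A p) (P j) (P p) *\<^sub>R A q +
      det3 (A p) (A q) (P j) *\<^sub>R P p)" by simp
  then have expand: "K * (cc \<bullet> P j) = det3 (P j) (A q) (P p) * (cc \<bullet> A p) +
      det3 (A p) (P j) (P p) * (cc \<bullet> A q) + det3 (A p) (A q) (P j) * (cc \<bullet> P p)"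
    by (simp add: inner_add_right)
  have coeff1: "det3 (P j) (A q) (P p) = - t2 * det3 (P p) (P q) (P j)"
    and coeff2: "det3 (A p) (P j) (P p) = - s1 * det3 (P r) (P p) (P j)"
    and coeff3: "det3 (A p) (A q) (P j) = s1 * s2 * det3 (P r) (P p) (P j) +
      s1 * t2 * det3 (P r) (P q) (P j) + t1 * t2 * det3 (P p) (P q) (P j)"
    unfolding st(3,6) by (simp_all add: vec3_simps algebra_simps)
  have "- t2 * det3 (P p) (P q) (P j) \<le> 0" "- s1 * det3 (P r) (P p) (P j) \<le> 0"
    "s1 * s2 * det3 (P r) (P p) (P j) + s1 * t2 * det3 (P r) (P q) (P j) + t1 * t2 * det3 (P p) (P q) (P j) \<ge> 0"
    using st nonneg by simp_all
  then have "det3 (P j) (A q) (P p) * (cc \<bullet> A p) \<le> 0" "det3 (A p) (P j) (P p) * (cc \<bullet> A q) \<le> 0"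
    "det3 (A p) (A q) (P j) * (cc \<bullet> P p) \<le> 0"
    unfolding coeff1 coeff2 coeff3 using cut unfolding q_def
    by (simp_all add: mult_nonpos_nonneg mult_nonneg_nonpos)
  moreover have "det3 (P j) (A q) (P p) * (cc \<bullet> A p) < 0 \<or> det3 (A p) (P j) (P p) * (cc \<bullet> A q) < 0"
  proof (cases "j = q")
    case True
    then have "det3 (P r) (P p) (P j) > 0" using det3_vertices_cyclic range cyc(2) \<open>r \<noteq> q\<close> by auto
    then show ?thesis unfolding coeff2 using st cut unfolding q_def by (auto intro: mult_neg_pos)
  next
    case False
    then have "det3 (P p) (P q) (P j) > 0" using det3_vertices_cyclic range j(1) cyc(1) by blast
    then show ?thesis unfolding coeff1 using st cut by (auto intro: mult_neg_pos)
  qed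
  ultimately have "K * (cc \<bullet> P j) < 0" unfolding expand by linarith
  then show ?thesis using K by (simp add: mult_less_0_iff)
qed

definition insert_at :: "nat \<Rightarrow> 'a \<Rightarrow> (nat \<Rightarrow> 'a) \<Rightarrow> nat \<Rightarrow> 'a" where
  "insert_at v x f i = (if i = v then x else f (unskip v i))"

lemma insert_at_skip: "insert_at v x f \<circ> skip v = f"
  unfolding insert_at_def by auto

text \<open>The old vertex \<open>P (v - 1)\<close> is cut off by the line \<open>cc\<close>, which meets the sides \<open>v - 1\<close> and \<open>v\<close>
  of the old polygon in the new vertices \<open>cut_prev\<close> and \<open>cut_next\<close>; the new flag \<open>(C, cc)\<close>
  becomes the flag number \<open>v\<close>.\<close>
locale ear_truncation = ear n v D + old: oriented_polygon "n - 1" c' P L A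
  for n v D c' P L A +
  fixes C cc :: "real^3" and al be :: real
  assumes cut: "cc \<bullet> A (v - 1) > 0" "cc \<bullet> A v > 0" "cc \<bullet> P (v - 1) < 0"
    and new_flag: "cc \<bullet> C = 0" "C = al *\<^sub>R A (v - 1) + be *\<^sub>R A v + P (v - 1)" "al > 0" "be > 0"
begin

definition cut_prev :: "real^3" where
  "cut_prev = (- (cc \<bullet> P (v - 1))) *\<^sub>R A (v - 1) + (cc \<bullet> A (v - 1)) *\<^sub>R P (v - 1)"

definition cut_next :: "real^3" where
  "cut_next = (- (cc \<bullet> P (v - 1))) *\<^sub>R A v + (cc \<bullet> A v) *\<^sub>R P (v - 1)"

definition new_vertex :: "nat \<Rightarrow> real^3" where
  "new_vertex = (insert_at v cut_next P)(v - 1 := cut_prev)"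

lemma old_indices: "v - 1 \<in> {1..n - 1}" "v \<in> {1..n - 1}" "cprev (n - 1) v = v - 1"
  using v2 vn unfolding cprev_def by auto

lemma new_vertex_other: "i \<noteq> v - 1 \<Longrightarrow> i \<noteq> v \<Longrightarrow> new_vertex i = P (unskip v i)"
  unfolding new_vertex_def insert_at_def by simp

lemma new_vertex_tip: "new_vertex (v - 1) = cut_prev" "new_vertex v = cut_next"
  using v2 unfolding new_vertex_def insert_at_def by auto

lemma cc_cut: "cc \<bullet> cut_prev = 0" "cc \<bullet> cut_next = 0"
  unfolding cut_prev_def cut_next_def by (simp_all add: inner_add_right algebra_simps)

lemma sides_through_cut: "L (v - 1) \<bullet> cut_prev = 0" "L v \<bullet> cut_next = 0"
proof -
  have "L (v - 1) \<bullet> A (v - 1) = 0" "L (v - 1) \<bullet> P (v - 1) = 0" "L v \<bullet> A v = 0" "L v \<bullet> P (v - 1) = 0"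
    using old.side_flag_incident old.side_cur old.side_prev[of v] old_indices by auto
  then show "L (v - 1) \<bullet> cut_prev = 0" "L v \<bullet> cut_next = 0"
    unfolding cut_prev_def cut_next_def by (simp_all add: inner_add_right inner_diff_right)
qed

lemma side_pos_at_cut:
  assumes "i \<in> {1..n - 1}"
  shows "i \<noteq> v - 1 \<Longrightarrow> L i \<bullet> cut_prev > 0" "i \<noteq> v \<Longrightarrow> L i \<bullet> cut_next > 0"
proof -
  have "(cc \<bullet> A (v - 1)) * (L i \<bullet> P (v - 1)) \<ge> 0" "(cc \<bullet> A v) * (L i \<bullet> P (v - 1)) \<ge> 0"
    using old.side_vertex_nonneg assms old_indices cut by simp_all
  moreover have "i \<noteq> v - 1 \<Longrightarrow> - (cc \<bullet> P (v - 1)) * (L i \<bullet> A (v - 1)) > 0"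
    "i \<noteq> v \<Longrightarrow> - (cc \<bullet> P (v - 1)) * (L i \<bullet> A v) > 0"
    using old.side_flag_pos[OF assms old_indices(1)] old.side_flag_pos[OF assms old_indices(2)] cut
    by (simp_all add: mult_neg_pos)
  ultimately show "i \<noteq> v - 1 \<Longrightarrow> L i \<bullet> cut_prev > 0" "i \<noteq> v \<Longrightarrow> L i \<bullet> cut_next > 0"
    unfolding cut_prev_def cut_next_def by (simp_all add: inner_add_right inner_diff_right)
qed

lemma new_side_prev:
  assumes i: "i \<in> {1..n}"
  shows "insert_at v cc L i \<bullet> new_vertex (cprev n i) = 0"
proof -
  consider "i = v" | "i = v + 1" | "i \<noteq> v" "i \<noteq> v + 1" by blast
  then show ?thesis
  proof cases
    case 1
    then show ?thesis using cprev_tip cc_cut new_vertex_tip unfolding insert_at_def by simp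
  next
    case 2
    then show ?thesis using cprev_tip sides_through_cut new_vertex_tip unfolding insert_at_def unskip_def
      by simp
  next
    case 3
    then show ?thesis using cprev_unskip[OF i] old.side_prev[OF unskip_range[OF i]] new_vertex_other
      unfolding insert_at_def by simp
  qed
qed

lemma new_side_cur:
  assumes i: "i \<in> {1..n}"
  shows "insert_at v cc L i \<bullet> new_vertex i = 0"
proof -
  consider "i = v" | "i = v - 1" | "i \<noteq> v" "i \<noteq> v - 1" by blast
  then show ?thesis
  proof cases
    case 1
    then show ?thesis using cc_cut new_vertex_tip unfolding insert_at_def by simp
  next
    case 2
    then show ?thesis using sides_through_cut new_vertex_tip v2 unfolding insert_at_def unskip_def by simp
  next
    case 3
    then show ?thesis using old.side_cur[OF unskip_range[OF i]] new_vertex_other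
      unfolding insert_at_def by simp
  qed
qed

lemma new_side_pos:
  assumes i: "i \<in> {1..n}" and j: "j \<in> {1..n}" "j \<noteq> cprev n i" "j \<noteq> i"
  shows "insert_at v cc L i \<bullet> new_vertex j > 0"
proof (cases "i = v")
  case True
  then have "j \<noteq> v - 1" "j \<noteq> v" using j cprev_tip by auto
  then show ?thesis using True old.cut_off_vertex_pos[of "v - 1" cc] cut v2 vn unskip_range[OF j(1)]
      unskip_eq_pred_iff new_vertex_other unfolding insert_at_def by auto
next
  case iv: False
  have old_i: "unskip v i \<in> {1..n - 1}" using unskip_range[OF i iv] .
  consider "j = v - 1" | "j = v" | "j \<noteq> v - 1" "j \<noteq> v" by blast
  then show ?thesis
  proof cases
    case 1
    then have "unskip v i \<noteq> v - 1" using j iv unskip_eq_pred_iff by auto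
    then show ?thesis using 1 iv side_pos_at_cut[OF old_i] new_vertex_tip unfolding insert_at_def by simp
  next
    case 2
    then have "unskip v i \<noteq> v" using j iv cprev_tip unskip_eq_tip_iff by auto
    then show ?thesis using 2 iv side_pos_at_cut[OF old_i] new_vertex_tip unfolding insert_at_def by simp
  next
    case 3
    have "unskip v j \<noteq> cprev (n - 1) (unskip v i)"
    proof (cases "i = v + 1")
      case True
      then show ?thesis using unskip_eq_pred_iff[of j] 3 iv unskip_eq_tip_iff[of i] old_indices by auto
    next
      case False
      then show ?thesis using cprev_unskip[OF i iv] unskip_inj 3 j by metis
    qed
    moreover have "unskip v j \<noteq> unskip v i" using unskip_inj 3 iv j by blast
    ultimately show ?thesis using old.side_pos[OF old_i unskip_range[OF j(1)]] 3 iv new_vertex_other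
      unfolding insert_at_def by auto
  qed
qed

end

lemma point_on_segment_after_cut:
  fixes X Y Q :: "real^3"
  assumes "s > 0" "t > 0" "u > 0" "w > 0" "X = s *\<^sub>R Y + t *\<^sub>R Q"
  shows "\<exists>s' t'. s' > 0 \<and> t' > 0 \<and> X = s' *\<^sub>R Y + t' *\<^sub>R (u *\<^sub>R X + w *\<^sub>R Q)"
proof (intro exI conjI)
  define d where "d = 1 + t * u / w"
  have "d > 0" unfolding d_def using assms by (simp add: add_pos_pos)
  show "s / d > 0" "t / w / d > 0" using assms \<open>d > 0\<close> by simp_all
  have "(s / d) *\<^sub>R Y + (t / w / d) *\<^sub>R (u *\<^sub>R X + w *\<^sub>R Q) =
      (1 / d) *\<^sub>R ((s *\<^sub>R Y + t *\<^sub>R Q) + (t * u / w) *\<^sub>R X)"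
    using assms(4) by (simp add: vec3_eq_iff field_simps)
  also have "\<dots> = (1 / d) *\<^sub>R (d *\<^sub>R X)" unfolding assms(5)[symmetric] d_def by (simp add: algebra_simps)
  also have "\<dots> = X" using \<open>d > 0\<close> by simp
  finally show "X = (s / d) *\<^sub>R Y + (t / w / d) *\<^sub>R (u *\<^sub>R X + w *\<^sub>R Q)" ..
qed

lemma scaleR_combination_divide:
  fixes A B Q :: "real^3"
  shows "u \<noteq> 0 \<Longrightarrow> (a / u) *\<^sub>R (u *\<^sub>R A + w1 *\<^sub>R Q) + (b / u) *\<^sub>R (u *\<^sub>R B + w2 *\<^sub>R Q) =
    a *\<^sub>R A + b *\<^sub>R B + ((a * w1 + b * w2) / u) *\<^sub>R Q"
  by (simp add: vec3_eq_iff field_simps)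

context ear_truncation
begin

lemma new_flag_between_cuts: "\<exists>s t. s > 0 \<and> t > 0 \<and> C = s *\<^sub>R cut_prev + t *\<^sub>R cut_next"
proof (intro exI conjI)
  define u where "u = - (cc \<bullet> P (v - 1))"
  have "u > 0" using cut unfolding u_def by simp
  then show "al / u > 0" "be / u > 0" using new_flag(3,4) by simp_all
  have sum: "al * (cc \<bullet> A (v - 1)) + be * (cc \<bullet> A v) = u"
    using new_flag(1,2) unfolding u_def by (simp add: inner_add_right algebra_simps)
  have "(al / u) *\<^sub>R cut_prev + (be / u) *\<^sub>R cut_next =
      al *\<^sub>R A (v - 1) + be *\<^sub>R A v + ((al * (cc \<bullet> A (v - 1)) + be * (cc \<bullet> A v)) / u) *\<^sub>R P (v - 1)"
    unfolding cut_prev_def cut_next_def u_def[symmetric]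
    by (rule scaleR_combination_divide) (use \<open>u > 0\<close> in simp)
  also have "\<dots> = C" using sum \<open>u > 0\<close> new_flag(2) by simp
  finally show "C = (al / u) *\<^sub>R cut_prev + (be / u) *\<^sub>R cut_next" ..
qed

lemma new_flag_on_side:
  assumes i: "i \<in> {1..n}"
  shows "\<exists>s t. s > 0 \<and> t > 0 \<and> insert_at v C A i = s *\<^sub>R new_vertex (cprev n i) + t *\<^sub>R new_vertex i"
proof -
  have u: "- (cc \<bullet> P (v - 1)) > 0" using cut by simp
  consider "i = v" | "i = v - 1" | "i = v + 1" | "i \<noteq> v" "i \<noteq> v - 1" "i \<noteq> v + 1" by blast
  then show ?thesis
  proof cases
    case 1
    then show ?thesis using new_flag_between_cuts cprev_tip new_vertex_tip unfolding insert_at_def by simp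
  next
    case 2
    then have "i \<noteq> v" "unskip v i = v - 1" using v2 unfolding unskip_def by auto
    then have vals: "insert_at v C A i = A (v - 1)" "new_vertex i = cut_prev"
      "new_vertex (cprev n i) = P (cprev (n - 1) (v - 1))"
      using cprev_unskip[OF i] 2 new_vertex_other new_vertex_tip unfolding insert_at_def by auto
    obtain s t where "s > 0" "t > 0" "A (v - 1) = s *\<^sub>R P (cprev (n - 1) (v - 1)) + t *\<^sub>R P (v - 1)"
      using old.flag_on_side old_indices by blast
    then have "\<exists>s t. s > 0 \<and> t > 0 \<and> A (v - 1) = s *\<^sub>R P (cprev (n - 1) (v - 1)) + t *\<^sub>R cut_prev"
      using point_on_segment_after_cut[of s t "- (cc \<bullet> P (v - 1))" "cc \<bullet> A (v - 1)"] u cut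
      unfolding cut_prev_def by blast
    then show ?thesis unfolding vals .
  next
    case 3
    then have "i \<noteq> v" "unskip v i = v" "i \<noteq> v - 1" unfolding unskip_def by auto
    then have vals: "insert_at v C A i = A v" "new_vertex i = P v" "new_vertex (cprev n i) = cut_next"
      using 3 cprev_tip new_vertex_other new_vertex_tip unfolding insert_at_def by auto
    obtain s t where "s > 0" "t > 0" "A v = s *\<^sub>R P (v - 1) + t *\<^sub>R P v"
      using old.flag_on_side[of v] old_indices by auto
    then have "A v = t *\<^sub>R P v + s *\<^sub>R P (v - 1)" "s > 0" "t > 0" by (simp_all add: add.commute)
    then obtain s' t' where "s' > 0" "t' > 0" "A v = s' *\<^sub>R P v + t' *\<^sub>R cut_next"
      using point_on_segment_after_cut[of t s "- (cc \<bullet> P (v - 1))" "cc \<bullet> A v"] u cut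
      unfolding cut_next_def by blast
    then have "A v = t' *\<^sub>R cut_next + s' *\<^sub>R P v" by (simp add: add.commute)
    then show ?thesis unfolding vals using \<open>s' > 0\<close> \<open>t' > 0\<close> by blast
  next
    case 4
    then show ?thesis using old.flag_on_side[OF unskip_range[OF i]] cprev_unskip[OF i] new_vertex_other
      unfolding insert_at_def by simp
  qed
qed

lemma truncation_inscribed:
  "inscribed_polygon n (insert_at v (C, cc) c') new_vertex (insert_at v cc L) (insert_at v C A)"
proof unfold_locales
  fix i assume i: "i \<in> {1..n}"
  show "\<exists>e. e \<noteq> 0 \<and> ln (insert_at v (C, cc) c') i = e *\<^sub>R insert_at v cc L i"
    using old.ln_scale[OF unskip_range[OF i]] unfolding insert_at_def ln_def
    by (cases "i = v") (auto intro: exI[of _ 1])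
  show "\<exists>r. r \<noteq> 0 \<and> pt (insert_at v (C, cc) c') i = r *\<^sub>R insert_at v C A i"
    using old.pt_scale[OF unskip_range[OF i]] unfolding insert_at_def pt_def
    by (cases "i = v") (auto intro: exI[of _ 1])
qed (use n4 new_side_prev new_side_cur new_side_pos new_flag_on_side in auto)

end

text \<open>The flag \<open>(C, cc)\<close> is found explicitly: \<open>C = al A + be B + Q\<close> where \<open>be\<close> and \<open>al\<close> are
  read off from the two prescribed cross-ratios, and \<open>cc\<close> is the line through \<open>C\<close> and
  \<open>rho A - B\<close>, where \<open>rho\<close> is read off from the prescribed triple ratio.\<close>
lemma exists_flag_with_ratios:
  fixes A B Q M a b :: "real^3" and X Y T :: real
  assumes inc: "a \<bullet> A = 0" "a \<bullet> Q = 0" "b \<bullet> B = 0" "b \<bullet> Q = 0"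
    and pos: "a \<bullet> B > 0" "b \<bullet> A > 0" "a \<bullet> M > 0" "b \<bullet> M > 0"
    and K: "det3 A B Q < 0" and dM: "det3 A B M > 0"
    and XYT: "X > 0" "Y > 0" "T > 0"
  shows "\<exists>C cc al be. al > 0 \<and> be > 0 \<and> C = al *\<^sub>R A + be *\<^sub>R B + Q \<and> cc \<bullet> C = 0 \<and>
    cc \<bullet> A > 0 \<and> cc \<bullet> B > 0 \<and> cc \<bullet> Q < 0 \<and>
    (a \<bullet> C) * det3 A B M / ((a \<bullet> M) * det3 A C B) = X \<and>
    (b \<bullet> M) * det3 B A C / ((b \<bullet> C) * det3 B M A) = Y \<and>
    triple_ratio A a C cc B b = T"
proof -
  define K dM where "K = det3 A B Q" and "dM = det3 A B M"
  define be where "be = X * (a \<bullet> M) * (- K) / ((a \<bullet> B) * dM)"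
  define al where "al = (b \<bullet> M) * (- K) / (Y * (b \<bullet> A) * dM)"
  define rho where "rho = T * al / be"
  define C where "C = al *\<^sub>R A + be *\<^sub>R B + Q"
  define cc where "cc = join (rho *\<^sub>R A - B) C"
  have "- K > 0" "dM > 0" using K dM unfolding K_def dM_def by simp_all
  have "be > 0" "al > 0" unfolding be_def al_def
    by (intro divide_pos_pos mult_pos_pos; use pos XYT \<open>- K > 0\<close> \<open>dM > 0\<close> in simp)+
  then have "rho > 0" unfolding rho_def using XYT by simp
  have cc: "cc \<bullet> C = 0" "cc \<bullet> A = - K" "cc \<bullet> B = rho * (- K)" "cc \<bullet> Q = K * (rho * be + al)"
    unfolding cc_def C_def K_def by (simp_all add: vec3_simps algebra_simps)
  have aC: "a \<bullet> C = be * (a \<bullet> B)" and bC: "b \<bullet> C = al * (b \<bullet> A)"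
    unfolding C_def using inc by (simp_all add: inner_add_right)
  have det: "det3 A C B = - K" "det3 B A C = - K" "det3 B M A = dM"
    unfolding C_def K_def dM_def by (simp_all add: vec3_simps algebra_simps)
  have "(a \<bullet> C) * dM / ((a \<bullet> M) * det3 A C B) = X"
    unfolding aC det(1) be_def using pos \<open>- K > 0\<close> \<open>dM > 0\<close> by (simp add: field_simps)
  moreover have "(b \<bullet> M) * det3 B A C / ((b \<bullet> C) * det3 B M A) = Y"
    unfolding bC det(2,3) al_def using pos \<open>- K > 0\<close> \<open>dM > 0\<close> XYT by (simp add: field_simps)
  moreover have "triple_ratio A a C cc B b = T"
    unfolding triple_ratio_def aC bC cc rho_def using pos \<open>- K > 0\<close> \<open>be > 0\<close> \<open>al > 0\<close>
    by (simp add: field_simps)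
  moreover have "rho * (- K) > 0" "rho * be + al > 0"
    using \<open>- K > 0\<close> \<open>rho > 0\<close> \<open>be > 0\<close> \<open>al > 0\<close> by (simp_all add: add_pos_pos mult_pos_neg)
  then have "cc \<bullet> A > 0" "cc \<bullet> B > 0" "cc \<bullet> Q < 0"
    unfolding cc using \<open>- K > 0\<close> by (simp_all add: mult_neg_pos)
  ultimately show ?thesis using \<open>be > 0\<close> \<open>al > 0\<close> cc(1) unfolding C_def dM_def by blast
qed

lemma (in ear) exists_tip_flag:
  assumes old: "oriented_polygon (n - 1) c' P L A" and XYT: "X > 0" "Y > 0" "T > 0"
  defines "m \<equiv> unskip v ear_opp_vertex"
  shows "\<exists>C cc al be. ear_truncation n v D c' P L A C cc al be \<and>
    (L (v - 1) \<bullet> C) * det3 (A (v - 1)) (A v) (A m) / ((L (v - 1) \<bullet> A m) * det3 (A (v - 1)) C (A v)) = X \<and>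
    (L v \<bullet> A m) * det3 (A v) (A (v - 1)) C / ((L v \<bullet> C) * det3 (A v) (A m) (A (v - 1))) = Y \<and>
    triple_ratio (A (v - 1)) (L (v - 1)) C cc (A v) (L v) = T"
proof -
  interpret old: oriented_polygon "n - 1" c' P L A by (rule old)
  have range: "v - 1 \<in> {1..n - 1}" "v \<in> {1..n - 1}" "m \<in> {1..n - 1}" "m \<noteq> v - 1" "m \<noteq> v"
    "cprev (n - 1) v = v - 1"
    using opp_vertex_ear_other v2 vn unfolding m_def unskip_def cprev_def by auto
  have inc: "L (v - 1) \<bullet> A (v - 1) = 0" "L (v - 1) \<bullet> P (v - 1) = 0" "L v \<bullet> A v = 0" "L v \<bullet> P (v - 1) = 0"
    using old.side_flag_incident[OF range(1)] old.side_flag_incident[OF range(2)] old.side_cur[OF range(1)]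
      old.side_prev[OF range(2)] range(6) by simp_all
  have pos: "L (v - 1) \<bullet> A v > 0" "L v \<bullet> A (v - 1) > 0" "L (v - 1) \<bullet> A m > 0" "L v \<bullet> A m > 0"
    using old.side_flag_pos[OF range(1) range(2)] old.side_flag_pos[OF range(2) range(1)]
      old.side_flag_pos[OF range(1) range(3)] old.side_flag_pos[OF range(2) range(3)] range(4,5) v2 by auto
  have K: "det3 (A (v - 1)) (A v) (P (v - 1)) < 0"
    using old.det3_flags_vertex_neg[of "v - 1"] v2 vn by simp
  have "cyclic3 (v - 1) v m" using range unfolding cyclic3_def by auto
  then have dM: "det3 (A (v - 1)) (A v) (A m) > 0"
    using flag_config.det3_cyclic_pos[OF old.flag_config_polygon] range by blast
  obtain C cc al be where flag: "al > 0" "be > 0" "C = al *\<^sub>R A (v - 1) + be *\<^sub>R A v + P (v - 1)"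
    "cc \<bullet> C = 0" "cc \<bullet> A (v - 1) > 0" "cc \<bullet> A v > 0" "cc \<bullet> P (v - 1) < 0"
    and ratios: "(L (v - 1) \<bullet> C) * det3 (A (v - 1)) (A v) (A m) / ((L (v - 1) \<bullet> A m) * det3 (A (v - 1)) C (A v)) = X"
    "(L v \<bullet> A m) * det3 (A v) (A (v - 1)) C / ((L v \<bullet> C) * det3 (A v) (A m) (A (v - 1))) = Y"
    "triple_ratio (A (v - 1)) (L (v - 1)) C cc (A v) (L v) = T"
    using exists_flag_with_ratios[OF inc pos K dM XYT] by blast
  have "ear n v D" using n4 tri v2 vn ear by unfold_locales
  then have "ear_truncation n v D c' P L A C cc al be"
    using old flag by (intro ear_truncation.intro ear_truncation_axioms.intro) auto
  then show ?thesis using ratios by blast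
qed

lemma (in ear) exists_ear_extension:
  assumes old: "oriented_polygon (n - 1) c' P L A" and XYT: "X > 0" "Y > 0" "T > 0"
  shows "\<exists>c\<in>Pconf n. c \<circ> skip v = c' \<and> coord n D c (Tri (v - 1) v (v + 1)) = T \<and>
    coord n D c (Dg (v - 1) (v + 1)) = X \<and> coord n D c (Dg (v + 1) (v - 1)) = Y"
proof -
  define m where "m = unskip v ear_opp_vertex"
  obtain C cc al be where tr: "ear_truncation n v D c' P L A C cc al be"
    and ratios: "(L (v - 1) \<bullet> C) * det3 (A (v - 1)) (A v) (A m) / ((L (v - 1) \<bullet> A m) * det3 (A (v - 1)) C (A v)) = X"
    "(L v \<bullet> A m) * det3 (A v) (A (v - 1)) C / ((L v \<bullet> C) * det3 (A v) (A m) (A (v - 1))) = Y"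
    "triple_ratio (A (v - 1)) (L (v - 1)) C cc (A v) (L v) = T"
    using exists_tip_flag[OF old XYT] unfolding m_def by blast
  interpret tr: ear_truncation n v D c' P L A C cc al be by (rule tr)
  define c where "c = insert_at v (C, cc) c'"
  define c0 where "c0 i = (insert_at v C A i, insert_at v cc L i)" for i
  interpret new: inscribed_polygon n c tr.new_vertex "insert_at v cc L" "insert_at v C A"
    unfolding c_def by (rule tr.truncation_inscribed)
  have ear_range: "{v - 1, v, v + 1, ear_opp_vertex} \<subseteq> {1..n}" using opp_vertex_ear_other v2 vn by auto
  have coord_c0: "coord n D c x = coord n D c0 x"
    if "x \<in> {Tri (v - 1) v (v + 1), Dg (v - 1) (v + 1), Dg (v + 1) (v - 1)}" for x
  proof (rule coord_rescale, intro ballI)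
    fix i assume "i \<in> coord_labels n D x"
    then have "i \<in> {1..n}" using coord_ear_labels[OF that] ear_range by blast
    then show "\<exists>r e. r \<noteq> 0 \<and> e \<noteq> 0 \<and> pt c i = r *\<^sub>R pt c0 i \<and> ln c i = e *\<^sub>R ln c0 i"
      using new.pt_scale new.ln_scale unfolding c0_def pt_def ln_def by fastforce
  qed
  have "unskip v (v - 1) = v - 1" "unskip v (v + 1) = v" "ear_opp_vertex \<noteq> v"
    using v2 opp_vertex_ear_other unfolding unskip_def by auto
  then have c0_vals: "pt c0 (v - 1) = A (v - 1)" "ln c0 (v - 1) = L (v - 1)" "pt c0 v = C" "ln c0 v = cc"
    "pt c0 (v + 1) = A v" "ln c0 (v + 1) = L v" "pt c0 ear_opp_vertex = A m"
    unfolding c0_def pt_def ln_def insert_at_def m_def using v2 by auto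
  have "L (v - 1) \<bullet> A (v - 1) = 0" "A (v - 1) \<noteq> 0" "L v \<bullet> A v = 0" "A v \<noteq> 0"
    using tr.old.side_flag_incident flag_config.pt_nonzero[OF tr.old.flag_config_polygon] tr.old_indices
    by auto
  then have "coord n D c0 (Dg (v - 1) (v + 1)) = X" "coord n D c0 (Dg (v + 1) (v - 1)) = Y"
    using coord_ear_diag[of c0] coord_ear_diag_rev[of c0] ratios unfolding c0_vals by simp_all
  moreover have "coord n D c0 (Tri (v - 1) v (v + 1)) = T" using ratios c0_vals by simp
  ultimately have "coord n D c (Tri (v - 1) v (v + 1)) = T" "coord n D c (Dg (v - 1) (v + 1)) = X"
    "coord n D c (Dg (v + 1) (v - 1)) = Y"
    using coord_c0[of "Tri (v - 1) v (v + 1)"] coord_c0[of "Dg (v - 1) (v + 1)"]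
      coord_c0[of "Dg (v + 1) (v - 1)"] by (simp_all del: coord.simps)
  moreover have "c \<in> Pconf n" by (rule new.in_Pconf)
  moreover have "c \<circ> skip v = c'" unfolding c_def by (rule insert_at_skip)
  ultimately show ?thesis by blast
qed

text \<open>The standard triangle with flag points \<open>e3 + T e1\<close>, \<open>e1 + e2\<close>, \<open>e2 + e3\<close> on its sides has
  triple ratio \<open>T\<close>.\<close>
lemma exists_config_3:
  assumes T: "T > 0"
  shows "\<exists>c\<in>Pconf 3. coord 3 D c (Tri 1 2 3) = T"
proof -
  define e1 e2 e3 where "e1 = (vector [1, 0, 0] :: real^3)" and "e2 = (vector [0, 1, 0] :: real^3)"
    and "e3 = (vector [0, 0, 1] :: real^3)"
  define P where "P i = (if i = 1 then e1 else if i = 2 then e2 else e3)" for i :: nat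
  define L where "L i = (if i = 1 then e2 else if i = 2 then e3 else e1)" for i :: nat
  define A where "A i = (if i = 1 then e3 + T *\<^sub>R e1 else if i = 2 then e1 + e2 else e2 + e3)" for i :: nat
  define c where "c i = (A i, L i)" for i :: nat
  have ip: "e1 \<bullet> e1 = 1" "e2 \<bullet> e2 = 1" "e3 \<bullet> e3 = 1" "e1 \<bullet> e2 = 0" "e1 \<bullet> e3 = 0" "e2 \<bullet> e1 = 0"
    "e2 \<bullet> e3 = 0" "e3 \<bullet> e1 = 0" "e3 \<bullet> e2 = 0"
    unfolding e1_def e2_def e3_def by (simp_all add: inner_real3 vector_def)
  have cp: "cprev 3 1 = 3" "cprev 3 2 = 1" "cprev 3 3 = 2" unfolding cprev_def by auto
  have three: "i \<in> {1..3} \<Longrightarrow> i = 1 \<or> i = 2 \<or> i = (3::nat)" for i by auto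
  have "inscribed_polygon 3 c P L A"
  proof unfold_locales
    fix i :: nat assume i: "i \<in> {1..3}"
    show "L i \<bullet> P (cprev 3 i) = 0" "L i \<bullet> P i = 0" using three[OF i] cp ip unfolding L_def P_def by auto
    show "\<exists>s t. s > 0 \<and> t > 0 \<and> A i = s *\<^sub>R P (cprev 3 i) + t *\<^sub>R P i"
      using three[OF i]
    proof (elim disjE)
      assume "i = 1"
      then show ?thesis using T cp unfolding A_def P_def by (intro exI[of _ 1] exI[of _ T]) simp
    next
      assume "i = 2"
      then show ?thesis using cp unfolding A_def P_def by (intro exI[of _ 1] exI[of _ 1]) simp
    next
      assume "i = 3"
      then show ?thesis using cp unfolding A_def P_def by (intro exI[of _ 1] exI[of _ 1]) simp
    qed
    show "\<exists>e. e \<noteq> 0 \<and> ln c i = e *\<^sub>R L i" "\<exists>r. r \<noteq> 0 \<and> pt c i = r *\<^sub>R A i"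
      unfolding c_def ln_def pt_def by (auto intro!: exI[of _ 1])
  next
    fix i j :: nat assume "i \<in> {1..3}" "j \<in> {1..3}" "j \<noteq> cprev 3 i" "j \<noteq> i"
    then show "L i \<bullet> P j > 0" using three[of i] three[of j] cp ip unfolding L_def P_def by auto
  qed simp
  then have "c \<in> Pconf 3" by (rule inscribed_polygon.in_Pconf)
  moreover have "coord 3 D c (Tri 1 2 3) = T"
    unfolding coord.simps triple_ratio_def c_def pt_def ln_def A_def L_def
    using ip T by (simp add: inner_add_right)
  ultimately show ?thesis by blast
qed

lemma Iset_3: "Iset 3 {} = {Tri 1 2 3}"
  unfolding Iset_def is_tri_def is_edge_def by auto

theorem exists_config_with_coords:
  "n \<ge> 3 \<Longrightarrow> poly_triangulation n D \<Longrightarrow> f \<in> Iset n D \<rightarrow>\<^sub>E {0<..} \<Longrightarrow> \<exists>c\<in>Pconf n. Phi n D c = f"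
proof (induction n D arbitrary: f rule: triangulation_induct)
  case triangle
  then have "f (Tri 1 2 3) > 0" using Iset_3 by auto
  then obtain c where "c \<in> Pconf 3" "coord 3 {} c (Tri 1 2 3) = f (Tri 1 2 3)"
    using exists_config_3 by blast
  moreover have "Phi 3 {} c = f" if "coord 3 {} c (Tri 1 2 3) = f (Tri 1 2 3)"
    using that triangle unfolding Phi_def Iset_3 by (auto simp: PiE_def extensional_def)
  ultimately show ?case by blast
next
  case (ear n v D)
  interpret ear n v D by (rule ear.hyps)
  define f' where "f' = restrict (f \<circ> skip_index v) (Iset (n - 1) (remove_ear v D))"
  have "f' \<in> Iset (n - 1) (remove_ear v D) \<rightarrow>\<^sub>E {0<..}"
    using ear.prems skip_index_in_Iset unfolding f'_def by auto
  then obtain c' where c': "c' \<in> Pconf (n - 1)" "Phi (n - 1) (remove_ear v D) c' = f'"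
    using ear.IH by blast
  have "n - 1 \<ge> 3" using n4 by simp
  then obtain P L A where "oriented_polygon (n - 1) c' P L A"
    using Pconf_oriented_polygon c'(1) by blast
  moreover have "f (Tri (v - 1) v (v + 1)) > 0" "f (Dg (v - 1) (v + 1)) > 0" "f (Dg (v + 1) (v - 1)) > 0"
    using ear.prems ear_coords_in_Iset by auto
  ultimately obtain c where c: "c \<in> Pconf n" "c \<circ> skip v = c'"
    "coord n D c (Tri (v - 1) v (v + 1)) = f (Tri (v - 1) v (v + 1))"
    "coord n D c (Dg (v - 1) (v + 1)) = f (Dg (v - 1) (v + 1))"
    "coord n D c (Dg (v + 1) (v - 1)) = f (Dg (v + 1) (v - 1))"
    using exists_ear_extension by blast
  have "coord n D c y = f y" if "y \<in> Iset n D" for y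
    using Iset_ear_cases[OF that]
  proof
    assume "\<exists>x\<in>Iset (n - 1) (remove_ear v D). y = skip_index v x"
    then obtain x where "x \<in> Iset (n - 1) (remove_ear v D)" "y = skip_index v x" by blast
    then show ?thesis using coord_skip_index c'(2) c(2)
      unfolding Phi_def f'_def by (metis comp_apply restrict_apply')
  qed (use c in auto)
  then have "Phi n D c = f" using ear.prems unfolding Phi_def by (auto simp: PiE_def extensional_def)
  then show ?case using c(1) by blast
qed

lemma pgl_related_refl: "pgl_related n (mat 1) c c"
  unfolding pgl_related_def by (auto intro!: exI[of _ 1])

lemma pgl_related_sym:
  assumes "g ** gi = mat 1" "gi ** g = mat 1" "pgl_related n g c d"
  shows "pgl_related n gi d c"
  unfolding pgl_related_def
proof
  fix i assume "i \<in> {1..n}"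
  then obtain s u where su: "s \<noteq> 0" "u \<noteq> 0" "pt d i = s *\<^sub>R (g *v pt c i)" "ln c i = u *\<^sub>R (ln d i v* g)"
    using assms(3) unfolding pgl_related_def by blast
  have "pt c i = (1 / s) *\<^sub>R (gi *v pt d i)"
    using su(1,3) assms(2) by (simp add: matrix_vector_mult_scaleR matrix_vector_mul_assoc)
  moreover have "ln d i = (1 / u) *\<^sub>R (ln c i v* gi)"
    using su(2,4) assms(1) by (simp add: scaleR_vector_matrix_assoc vector_matrix_inverse)
  ultimately show "\<exists>s u. s \<noteq> 0 \<and> u \<noteq> 0 \<and> pt c i = s *\<^sub>R (gi *v pt d i) \<and> ln d i = u *\<^sub>R (ln c i v* gi)"
    using su(1,2) by (intro exI[of _ "1 / s"] exI[of _ "1 / u"]) simp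
qed

lemma pgl_related_trans:
  assumes "pgl_related n g1 c d" "pgl_related n g2 d e"
  shows "pgl_related n (g2 ** g1) c e"
  unfolding pgl_related_def
proof
  fix i assume "i \<in> {1..n}"
  then obtain s1 u1 s2 u2 where su: "s1 \<noteq> 0" "u1 \<noteq> 0" "pt d i = s1 *\<^sub>R (g1 *v pt c i)"
    "ln c i = u1 *\<^sub>R (ln d i v* g1)" "s2 \<noteq> 0" "u2 \<noteq> 0" "pt e i = s2 *\<^sub>R (g2 *v pt d i)"
    "ln d i = u2 *\<^sub>R (ln e i v* g2)"
    using assms unfolding pgl_related_def by meson
  then have "pt e i = (s2 * s1) *\<^sub>R ((g2 ** g1) *v pt c i)" "ln c i = (u1 * u2) *\<^sub>R (ln e i v* (g2 ** g1))"
    by (simp_all add: matrix_vector_mult_scaleR matrix_vector_mul_assoc scaleR_vector_matrix_assoc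
        vector_matrix_mul_assoc)
  then show "\<exists>s u. s \<noteq> 0 \<and> u \<noteq> 0 \<and> pt e i = s *\<^sub>R ((g2 ** g1) *v pt c i) \<and>
      ln c i = u *\<^sub>R (ln e i v* (g2 ** g1))"
    using su by (intro exI[of _ "s2 * s1"] exI[of _ "u1 * u2"]) simp
qed

lemma pgl_rel_equiv: "equiv (Pconf n) (pgl_rel n)"
proof (rule equivI)
  show "pgl_rel n \<subseteq> Pconf n \<times> Pconf n" unfolding pgl_rel_def by auto
  show "refl_on (Pconf n) (pgl_rel n)"
    using pgl_related_refl invertible_def[of "mat 1"] unfolding refl_on_def pgl_rel_iff
    by (auto simp: matrix_mul_lid)
  show "sym (pgl_rel n)"
    using pgl_related_sym unfolding sym_def pgl_rel_iff invertible_def by blast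
  show "trans (pgl_rel n)"
    using pgl_related_trans invertible_mult unfolding trans_def pgl_rel_iff by blast
qed

lemma Phi_pgl_invariant:
  assumes "n \<ge> 3" "poly_triangulation n D" "(c, d) \<in> pgl_rel n"
  shows "Phi n D d = Phi n D c"
proof -
  obtain g where "c \<in> Pconf n" "invertible g" "pgl_related n g c d" using assms(3) pgl_rel_iff by blast
  then show ?thesis unfolding Phi_def
    using coord_pgl_invariant[OF assms(1,2) Pconf_convex_flags[OF assms(1)]] by (intro restrict_ext) blast
qed

lemma PhiQ_class:
  assumes "n \<ge> 3" "poly_triangulation n D" "c \<in> Pconf n"
  shows "PhiQ n D (pgl_rel n `` {c}) = Phi n D c"
proof -
  have "c \<in> pgl_rel n `` {c}" using equiv_class_self[OF pgl_rel_equiv assms(3)] .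
  then have "(SOME d. d \<in> pgl_rel n `` {c}) \<in> pgl_rel n `` {c}"
    by (rule someI[of "\<lambda>d. d \<in> pgl_rel n `` {c}"])
  then show ?thesis unfolding PhiQ_def using Phi_pgl_invariant[OF assms(1,2)] by simp
qed

lemma Phi_positive:
  "n \<ge> 3 \<Longrightarrow> poly_triangulation n D \<Longrightarrow> c \<in> Pconf n \<Longrightarrow> Phi n D c \<in> Iset n D \<rightarrow>\<^sub>E {0<..}"
  unfolding Phi_def using convex_flags_coord_pos Pconf_convex_flags by auto

lemma PhiQ_inj_on:
  assumes "n \<ge> 3" "poly_triangulation n D"
  shows "inj_on (PhiQ n D) (P3 n)"
proof (rule inj_onI)
  fix X Y assume "X \<in> P3 n" "Y \<in> P3 n" and eq: "PhiQ n D X = PhiQ n D Y"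
  then obtain c d where cd: "c \<in> Pconf n" "d \<in> Pconf n" "X = pgl_rel n `` {c}" "Y = pgl_rel n `` {d}"
    unfolding P3_def by (metis quotientE)
  then have "\<forall>x\<in>Iset n D. coord n D c x = coord n D d x"
    using eq PhiQ_class[OF assms] unfolding Phi_def by (metis restrict_apply')
  then have "(c, d) \<in> pgl_rel n"
    using pgl_related_if_coords_eq[OF assms] Pconf_convex_flags[OF assms(1)] cd pgl_rel_iff by blast
  then show "X = Y" using cd equiv_class_eq[OF pgl_rel_equiv] by simp
qed

lemma PhiQ_image:
  assumes "n \<ge> 3" "poly_triangulation n D"
  shows "PhiQ n D ` P3 n = Iset n D \<rightarrow>\<^sub>E {0<..}"
proof
  show "PhiQ n D ` P3 n \<subseteq> Iset n D \<rightarrow>\<^sub>E {0<..}"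
  proof
    fix y assume "y \<in> PhiQ n D ` P3 n"
    then obtain c where "c \<in> Pconf n" "y = PhiQ n D (pgl_rel n `` {c})"
      unfolding P3_def by (auto elim!: quotientE)
    then show "y \<in> Iset n D \<rightarrow>\<^sub>E {0<..}" using PhiQ_class[OF assms] Phi_positive[OF assms] by simp
  qed
  show "Iset n D \<rightarrow>\<^sub>E {0<..} \<subseteq> PhiQ n D ` P3 n"
    using exists_config_with_coords[OF assms] PhiQ_class[OF assms] unfolding P3_def
    by (force intro: quotientI)
qed

theorem mainTheorem3:
  fixes n :: nat and D :: "(nat \<times> nat) set"
  assumes "n \<ge> 3" and "poly_triangulation n D"
  shows "bij_betw (PhiQ n D) (P3 n) (Iset n D \<rightarrow>\<^sub>E {0<..})"
  unfolding bij_betw_def using PhiQ_inj_on[OF assms] PhiQ_image[OF assms] by blast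

end
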